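(* In the Markovian setting with finite horizon $T<\infty$, there exists a unique equilibrium with preference for early stopping, and this equilibrium is Markovian (i.e., $\theta_t$ is $\sigma(X_t,1_{D_t})$-measurable for every $t\le T$).
   Context: Markovian setting: $T\in\mathbb{N}$, $\mathbb{T}=\{0,\dots,T\}$; $(\Omega,\mathcal{F},P)$ with filtration $(\mathcal{F}_t)_{t\le T}$, $\mathcal{F}_0$ trivial; $X$ is a Markov chain (with respect to $(\mathcal{F}_t)$) with values in a separable metric space $\mathbb{X}$ and deterministic $X_0=x_0$; $B\subseteq\mathbb{X}$ is measurable with $x_0\in B$; $\sigma=\inf\{t\ge0: X_t\notin B\}$ and $D_t=\{t<\sigma\}$. The payoff is $G_t=\delta^t g(t,X_t)$ on $D_t$ for a deterministic measurable function $g$ and $\delta\in(0,1]$, and $G_t=\Delta$ on $D_t^c$, where $\Delta$ is an auxiliary symbol with $0\cdot\Delta=0$; assume $E[\sup_{t\le T}|G_t|1_{D_t}]<\infty$. Notation: $s\lhd t$ iff $s<t$ or $t=\infty$; $\inf\emptyset=\infty$. Effective horizon $T_e=T\wedge\inf\{0\le t<T:P(D_{t+1}\mid\mathcal{F}_t)=0\}$. A stopping policy is a $\{0,1\}$-valued adapted process $\theta=(\theta_t)_{t\in\mathbb{T}}$; $\mathcal{L}_t\theta=\inf\{s>t:\theta_s=1\}$; $\theta$ is admissible if $P(\mathcal{L}_t\theta\lhd\sigma\mid\mathcal{F}_t)>0$ on $\{t<T_e\}$ and $\theta_t=1$ on $\{t\ge T_e\}$. For admissible $\theta$, on $\{t<T_e\}$,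 $J_t(\theta)=E[G_{\mathcal{L}_t\theta}1_{\{\mathcal{L}_t\theta\lhd\sigma\}}\mid\mathcal{F}_t]/P(\mathcal{L}_t\theta\lhd\sigma\mid\mathcal{F}_t)$. $\Phi(\theta)_t$ equals $1$ on $\{t<T_e,G_t>J_t(\theta)\}$, $\theta_t$ on $\{t<T_e,G_t=J_t(\theta)\}$, $0$ on $\{t<T_e,G_t<J_t(\theta)\}$, $1$ on $\{t\ge T_e\}$. An equilibrium is an admissible $\theta$ with $\Phi(\theta)=\theta$; it has preference for early stopping if moreover $\theta_t=1$ on $\{t<T_e,G_t=J_t(\theta)\}$. *)

theory Defs
  imports "HOL-Probability.Probability"
begin

definition lhd :: "enat \<Rightarrow> enat \<Rightarrow> bool" where
  "lhd s t \<longleftrightarrow> s < t \<or> t = \<infinity>"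

definition exit_time :: "nat \<Rightarrow> (nat \<Rightarrow> 'a \<Rightarrow> 'x) \<Rightarrow> 'x set \<Rightarrow> 'a \<Rightarrow> enat" where
  "exit_time T X B \<omega> =
     (if \<exists>t\<le>T. X t \<omega> \<notin> B then enat (LEAST t. t \<le> T \<and> X t \<omega> \<notin> B) else \<infinity>)"

definition Dset :: "'a measure \<Rightarrow> nat \<Rightarrow> (nat \<Rightarrow> 'a \<Rightarrow> 'x) \<Rightarrow> 'x set \<Rightarrow> nat \<Rightarrow> 'a set" where
  "Dset M T X B t = {\<omega> \<in> space M. enat t < exit_time T X B \<omega>}"

definition Gval :: "real \<Rightarrow> (nat \<Rightarrow> 'x \<Rightarrow> real) \<Rightarrow> (nat \<Rightarrow> 'a \<Rightarrow> 'x) \<Rightarrow> nat \<Rightarrow> 'a \<Rightarrow> real" where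
  "Gval \<delta> g X t \<omega> = \<delta> ^ t * g t (X t \<omega>)"

definition cprob :: "'a measure \<Rightarrow> 'a measure \<Rightarrow> 'a set \<Rightarrow> 'a \<Rightarrow> real" where
  "cprob M N A = real_cond_exp M N (indicator (A \<inter> space M))"

definition eff_horizon ::
  "'a measure \<Rightarrow> (nat \<Rightarrow> 'a measure) \<Rightarrow> nat \<Rightarrow> (nat \<Rightarrow> 'a \<Rightarrow> 'x) \<Rightarrow> 'x set \<Rightarrow> 'a \<Rightarrow> nat" where
  "eff_horizon M F T X B \<omega> =
     (if \<exists>t<T. cprob M (F t) (Dset M T X B (Suc t)) \<omega> = 0
      then (LEAST t. t < T \<and> cprob M (F t) (Dset M T X B (Suc t)) \<omega> = 0) else T)"

definition next_stop :: "nat \<Rightarrow> (nat \<Rightarrow> 'a \<Rightarrow> bool) \<Rightarrow> nat \<Rightarrow> 'a \<Rightarrow> enat" where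
  "next_stop T \<theta> t \<omega> =
     (if \<exists>s. t < s \<and> s \<le> T \<and> \<theta> s \<omega> then enat (LEAST s. t < s \<and> s \<le> T \<and> \<theta> s \<omega>) else \<infinity>)"

text \<open>stopping policy: {0,1}-valued (here bool-valued) adapted process\<close>
definition stopping_policy :: "(nat \<Rightarrow> 'a measure) \<Rightarrow> nat \<Rightarrow> (nat \<Rightarrow> 'a \<Rightarrow> bool) \<Rightarrow> bool" where
  "stopping_policy F T \<theta> \<longleftrightarrow> (\<forall>t\<le>T. \<theta> t \<in> F t \<rightarrow>\<^sub>M count_space UNIV)"

definition stop_before_exit ::
  "'a measure \<Rightarrow> nat \<Rightarrow> (nat \<Rightarrow> 'a \<Rightarrow> 'x) \<Rightarrow> 'x set \<Rightarrow> (nat \<Rightarrow> 'a \<Rightarrow> bool) \<Rightarrow> nat \<Rightarrow> 'a set" where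
  "stop_before_exit M T X B \<theta> t =
     {\<omega> \<in> space M. lhd (next_stop T \<theta> t \<omega>) (exit_time T X B \<omega>)}"

definition admissible ::
  "'a measure \<Rightarrow> (nat \<Rightarrow> 'a measure) \<Rightarrow> nat \<Rightarrow> (nat \<Rightarrow> 'a \<Rightarrow> 'x) \<Rightarrow> 'x set \<Rightarrow> (nat \<Rightarrow> 'a \<Rightarrow> bool) \<Rightarrow> bool" where
  "admissible M F T X B \<theta> \<longleftrightarrow> stopping_policy F T \<theta> \<and>
     (\<forall>t\<le>T. AE \<omega> in M. t < eff_horizon M F T X B \<omega> \<longrightarrow>
                          cprob M (F t) (stop_before_exit M T X B \<theta> t) \<omega> > 0) \<and>
     (\<forall>t\<le>T. AE \<omega> in M. eff_horizon M F T X B \<omega> \<le> t \<longrightarrow> \<theta> t \<omega>)"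

text \<open>G_(L_t theta) 1_{L_t theta lhd sigma} (with 0 * Delta = 0)\<close>
definition stopped_payoff ::
  "nat \<Rightarrow> (nat \<Rightarrow> 'a \<Rightarrow> 'x) \<Rightarrow> 'x set \<Rightarrow> real \<Rightarrow> (nat \<Rightarrow> 'x \<Rightarrow> real) \<Rightarrow> (nat \<Rightarrow> 'a \<Rightarrow> bool) \<Rightarrow> nat \<Rightarrow> 'a \<Rightarrow> real" where
  "stopped_payoff T X B \<delta> g \<theta> t \<omega> =
     (if lhd (next_stop T \<theta> t \<omega>) (exit_time T X B \<omega>)
      then (case next_stop T \<theta> t \<omega> of enat s \<Rightarrow> Gval \<delta> g X s \<omega> | \<infinity> \<Rightarrow> 0) else 0)"

definition Jval ::
  "'a measure \<Rightarrow> (nat \<Rightarrow> 'a measure) \<Rightarrow> nat \<Rightarrow> (nat \<Rightarrow> 'a \<Rightarrow> 'x) \<Rightarrow> 'x set \<Rightarrow> real \<Rightarrow> (nat \<Rightarrow> 'x \<Rightarrow> real)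
     \<Rightarrow> (nat \<Rightarrow> 'a \<Rightarrow> bool) \<Rightarrow> nat \<Rightarrow> 'a \<Rightarrow> real" where
  "Jval M F T X B \<delta> g \<theta> t \<omega> =
     real_cond_exp M (F t) (stopped_payoff T X B \<delta> g \<theta> t) \<omega> /
     cprob M (F t) (stop_before_exit M T X B \<theta> t) \<omega>"

definition Phi ::
  "'a measure \<Rightarrow> (nat \<Rightarrow> 'a measure) \<Rightarrow> nat \<Rightarrow> (nat \<Rightarrow> 'a \<Rightarrow> 'x) \<Rightarrow> 'x set \<Rightarrow> real \<Rightarrow> (nat \<Rightarrow> 'x \<Rightarrow> real)
     \<Rightarrow> (nat \<Rightarrow> 'a \<Rightarrow> bool) \<Rightarrow> nat \<Rightarrow> 'a \<Rightarrow> bool" where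
  "Phi M F T X B \<delta> g \<theta> t \<omega> =
     (if t < eff_horizon M F T X B \<omega> then
        (if Gval \<delta> g X t \<omega> > Jval M F T X B \<delta> g \<theta> t \<omega> then True
         else if Gval \<delta> g X t \<omega> = Jval M F T X B \<delta> g \<theta> t \<omega> then \<theta> t \<omega>
         else False)
      else True)"

definition equilibrium ::
  "'a measure \<Rightarrow> (nat \<Rightarrow> 'a measure) \<Rightarrow> nat \<Rightarrow> (nat \<Rightarrow> 'a \<Rightarrow> 'x) \<Rightarrow> 'x set \<Rightarrow> real \<Rightarrow> (nat \<Rightarrow> 'x \<Rightarrow> real)
     \<Rightarrow> (nat \<Rightarrow> 'a \<Rightarrow> bool) \<Rightarrow> bool" where
  "equilibrium M F T X B \<delta> g \<theta> \<longleftrightarrow> admissible M F T X B \<theta> \<and>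
     (\<forall>t\<le>T. AE \<omega> in M. Phi M F T X B \<delta> g \<theta> t \<omega> = \<theta> t \<omega>)"

definition equilibrium_early ::
  "'a measure \<Rightarrow> (nat \<Rightarrow> 'a measure) \<Rightarrow> nat \<Rightarrow> (nat \<Rightarrow> 'a \<Rightarrow> 'x) \<Rightarrow> 'x set \<Rightarrow> real \<Rightarrow> (nat \<Rightarrow> 'x \<Rightarrow> real)
     \<Rightarrow> (nat \<Rightarrow> 'a \<Rightarrow> bool) \<Rightarrow> bool" where
  "equilibrium_early M F T X B \<delta> g \<theta> \<longleftrightarrow> equilibrium M F T X B \<delta> g \<theta> \<and>
     (\<forall>t\<le>T. AE \<omega> in M. (t < eff_horizon M F T X B \<omega> \<and>
                          Gval \<delta> g X t \<omega> = Jval M F T X B \<delta> g \<theta> t \<omega>) \<longrightarrow> \<theta> t \<omega>)"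

definition markovian_policy ::
  "'a measure \<Rightarrow> nat \<Rightarrow> (nat \<Rightarrow> 'a \<Rightarrow> 'x::topological_space) \<Rightarrow> 'x set \<Rightarrow> (nat \<Rightarrow> 'a \<Rightarrow> bool) \<Rightarrow> bool" where
  "markovian_policy M T X B \<theta> \<longleftrightarrow>
     (\<forall>t\<le>T. \<theta> t \<in> vimage_algebra (space M) (\<lambda>\<omega>. (X t \<omega>, indicator (Dset M T X B t) \<omega> :: real))
                                     (borel \<Otimes>\<^sub>M borel) \<rightarrow>\<^sub>M count_space UNIV)"

definition markov_chain ::
  "'a measure \<Rightarrow> (nat \<Rightarrow> 'a measure) \<Rightarrow> nat \<Rightarrow> (nat \<Rightarrow> 'a \<Rightarrow> 'x::topological_space) \<Rightarrow> bool" where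
  "markov_chain M F T X \<longleftrightarrow>
     (\<forall>t\<le>T. X t \<in> borel_measurable (F t)) \<and>
     (\<forall>t<T. \<forall>A\<in>sets borel. AE \<omega> in M.
        real_cond_exp M (F t) (\<lambda>\<omega>. indicator A (X (Suc t) \<omega>)) \<omega> =
        real_cond_exp M (vimage_algebra (space M) (X t) borel) (\<lambda>\<omega>. indicator A (X (Suc t) \<omega>)) \<omega>)"

end

(* Backward induction from the horizon.  By the Markov property, for t < T a conditional
   expectation given F t of a function of X (t + 1) and 1_{D t} may be taken given the current
   state sigma(X t, 1_{D t}) instead.  Hence, starting at T, the numerator and the denominator
   of J_t for the policy "stop iff J_t <= G_t" have versions that are functions of the current
   state: this policy is Markovian, and it is an equilibrium with preference for early
   stopping.  Conversely, any such equilibrium stops at t iff J_t <= G_t, and J_t depends only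
   on the policy after t, so by backward induction it agrees almost surely with the
   constructed one. *)

theory Submission
  imports Defs
begin

section \<open>Exit times and next stopping times\<close>

lemma lhd_enat_iff [simp]: "lhd (enat s) e \<longleftrightarrow> enat s < e"
  unfolding lhd_def by (cases e) auto

lemma lhd_infinity_iff [simp]: "lhd \<infinity> e \<longleftrightarrow> e = \<infinity>"
  unfolding lhd_def by (cases e) auto

lemma enat_less_exit_time_iff:
  assumes "t \<le> T"
  shows "enat t < exit_time T X B \<omega> \<longleftrightarrow> (\<forall>s\<le>t. X s \<omega> \<in> B)"
proof (cases "\<exists>s\<le>T. X s \<omega> \<notin> B")
  case True
  let ?P = "\<lambda>s. s \<le> T \<and> X s \<omega> \<notin> B"
  have "?P (Least ?P)"
    using True by (metis (mono_tags, lifting) LeastI)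
  moreover have "\<not> ?P s" if "s < Least ?P" for s
    using not_less_Least that .
  ultimately have "t < Least ?P \<longleftrightarrow> (\<forall>s\<le>t. X s \<omega> \<in> B)"
    using assms by (meson le_less_trans order.trans not_le)
  then show ?thesis
    using True by (simp add: exit_time_def)
qed (use assms in \<open>auto simp: exit_time_def\<close>)

lemma enat_horizon_less_exit_time_iff:
  "enat T < exit_time T X B \<omega> \<longleftrightarrow> exit_time T X B \<omega> = \<infinity>"
proof (cases "\<exists>s\<le>T. X s \<omega> \<notin> B")
  case True
  then have "(LEAST s. s \<le> T \<and> X s \<omega> \<notin> B) \<le> T"
    by (metis (mono_tags, lifting) LeastI_ex)
  then show ?thesis
    using True by (simp add: exit_time_def)
qed (auto simp: exit_time_def)

lemma next_stop_horizon [simp]: "next_stop T \<theta> T \<omega> = \<infinity>"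
  unfolding next_stop_def by auto

lemma next_stop_Suc:
  assumes "t < T"
  shows "next_stop T \<theta> t \<omega> = (if \<theta> (Suc t) \<omega> then enat (Suc t) else next_stop T \<theta> (Suc t) \<omega>)"
proof (cases "\<theta> (Suc t) \<omega>")
  case True
  have "(LEAST s. t < s \<and> s \<le> T \<and> \<theta> s \<omega>) = Suc t"
    using True assms by (intro Least_equality) auto
  moreover have "\<exists>s. t < s \<and> s \<le> T \<and> \<theta> s \<omega>"
    using True assms by (intro exI[of _ "Suc t"]) simp
  ultimately show ?thesis
    using True unfolding next_stop_def by simp
next
  case False
  then have shift: "\<And>s. t < s \<and> s \<le> T \<and> \<theta> s \<omega> \<longleftrightarrow> Suc t < s \<and> s \<le> T \<and> \<theta> s \<omega>"
    by (metis Suc_lessD Suc_lessI)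
  show ?thesis
    using False unfolding next_stop_def shift by simp
qed

lemma next_stop_eq_enatD:
  assumes "next_stop T \<theta> t \<omega> = enat s"
  shows "t < s \<and> s \<le> T \<and> \<theta> s \<omega>"
proof -
  have ex: "\<exists>s. t < s \<and> s \<le> T \<and> \<theta> s \<omega>"
    using assms unfolding next_stop_def by (auto split: if_splits)
  then have "s = (LEAST s. t < s \<and> s \<le> T \<and> \<theta> s \<omega>)"
    using assms unfolding next_stop_def by simp
  then show ?thesis
    using LeastI_ex[OF ex] by simp
qed

lemma next_stop_cong:
  assumes "\<And>s. t < s \<Longrightarrow> s \<le> T \<Longrightarrow> \<theta> s \<omega> = \<theta>' s \<omega>"
  shows "next_stop T \<theta> t \<omega> = next_stop T \<theta>' t \<omega>"
proof -
  have same: "\<And>s. t < s \<and> s \<le> T \<and> \<theta> s \<omega> \<longleftrightarrow> t < s \<and> s \<le> T \<and> \<theta>' s \<omega>"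
    using assms by blast
  show ?thesis
    unfolding next_stop_def same ..
qed

lemma less_eff_horizon_iff:
  "t < eff_horizon M F T X B \<omega> \<longleftrightarrow> t < T \<and> (\<forall>s\<le>t. cprob M (F s) (Dset M T X B (Suc s)) \<omega> \<noteq> 0)"
proof -
  define c where "c s = cprob M (F s) (Dset M T X B (Suc s)) \<omega>" for s
  let ?P = "\<lambda>s. s < T \<and> c s = 0"
  have "t < Least ?P \<longleftrightarrow> t < T \<and> (\<forall>s\<le>t. c s \<noteq> 0)" if ex: "\<exists>s. ?P s"
  proof
    assume t: "t < Least ?P"
    have "?P (Least ?P)"
      using LeastI_ex[OF ex] .
    moreover have "\<not> ?P s" if "s \<le> t" for s
      using not_less_Least[of s ?P] t that by simp
    ultimately show "t < T \<and> (\<forall>s\<le>t. c s \<noteq> 0)"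
      using t by auto
  next
    assume "t < T \<and> (\<forall>s\<le>t. c s \<noteq> 0)"
    then show "t < Least ?P"
      using LeastI_ex[OF ex] by (metis not_le)
  qed
  then show ?thesis
    unfolding eff_horizon_def c_def[symmetric] by auto
qed

section \<open>Conditional expectations\<close>

lemma (in prob_space) sigma_finite_subalgebra_if_subalgebra:
  "subalgebra M N \<Longrightarrow> sigma_finite_subalgebra M N"
  by (rule finite_measure_subalgebra_is_sigma_finite)
     (simp add: finite_measure_subalgebra_def finite_measure_subalgebra_axioms_def finite_measure_axioms)

context sigma_finite_subalgebra
begin

lemma real_cond_exp_indicator_if:
  assumes D: "D \<in> sets F" and c: "c \<in> F \<rightarrow>\<^sub>M count_space UNIV" and V: "V \<in> borel_measurable F"
    and int_V: "integrable M (\<lambda>\<omega>. indicator D \<omega> * V \<omega>)" and int_Z: "integrable M Z"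
  shows "AE \<omega> in M. real_cond_exp M F (\<lambda>\<omega>. indicator D \<omega> * (if c \<omega> then V \<omega> else Z \<omega>)) \<omega> =
                     indicator D \<omega> * (if c \<omega> then V \<omega> else real_cond_exp M F Z \<omega>)"
proof -
  have [measurable]: "D \<in> sets M" "c \<in> M \<rightarrow>\<^sub>M count_space UNIV" "V \<in> borel_measurable M"
    using D measurable_from_subalg[OF subalg c] measurable_from_subalg[OF subalg V] subalg
    by (auto simp: subalgebra_def)
  have [measurable]: "Z \<in> borel_measurable M"
    using int_Z by auto
  note [measurable] = D c V
  define stop where "stop \<omega> = indicator D \<omega> * (if c \<omega> then V \<omega> else 0)" for \<omega>
  define cont where "cont \<omega> = indicator D \<omega> * (if c \<omega> then 0 else 1 :: real)" for \<omega>
  have [measurable]: "stop \<in> borel_measurable F" "cont \<in> borel_measurable F"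
    unfolding stop_def cont_def by measurable
  have [measurable]: "stop \<in> borel_measurable M" "cont \<in> borel_measurable M"
    unfolding stop_def cont_def by measurable
  have int_stop: "integrable M stop"
    by (rule Bochner_Integration.integrable_bound[OF int_V]) (auto simp: stop_def indicator_def)
  have int_cont: "integrable M (\<lambda>\<omega>. cont \<omega> * Z \<omega>)"
    by (rule Bochner_Integration.integrable_bound[OF int_Z]) (auto simp: cont_def indicator_def)
  have split: "(\<lambda>\<omega>. indicator D \<omega> * (if c \<omega> then V \<omega> else Z \<omega>)) = (\<lambda>\<omega>. stop \<omega> + cont \<omega> * Z \<omega>)"
    by (auto simp: stop_def cont_def fun_eq_iff indicator_def)
  have "AE \<omega> in M. real_cond_exp M F (\<lambda>\<omega>. stop \<omega> + cont \<omega> * Z \<omega>) \<omega>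
      = real_cond_exp M F stop \<omega> + real_cond_exp M F (\<lambda>\<omega>. cont \<omega> * Z \<omega>) \<omega>"
    by (rule real_cond_exp_add[OF int_stop int_cont])
  moreover have "AE \<omega> in M. real_cond_exp M F stop \<omega> = stop \<omega>"
    by (rule real_cond_exp_F_meas) (auto simp: int_stop)
  moreover have "AE \<omega> in M. real_cond_exp M F (\<lambda>\<omega>. cont \<omega> * Z \<omega>) \<omega> = cont \<omega> * real_cond_exp M F Z \<omega>"
    by (rule real_cond_exp_mult) (auto simp: int_cont)
  ultimately show ?thesis
    unfolding split by eventually_elim (auto simp: stop_def cont_def indicator_def)
qed

lemma real_cond_exp_nonpos_set: "{\<omega>\<in>space M. real_cond_exp M F Y \<omega> \<le> 0} \<in> sets F"
proof -
  have "{\<omega>\<in>space F. real_cond_exp M F Y \<omega> \<le> 0} \<in> sets F"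
    by measurable
  moreover have "space F = space M"
    using subalg by (simp add: subalgebra_def)
  ultimately show ?thesis
    by simp
qed

lemma real_cond_exp_nonpos_imp_eq_0:
  assumes int_Y: "integrable M Y" and Y_nonneg: "AE \<omega> in M. 0 \<le> Y \<omega>"
  shows "AE \<omega> in M. real_cond_exp M F Y \<omega> \<le> 0 \<longrightarrow> Y \<omega> = 0"
proof -
  have [measurable]: "Y \<in> borel_measurable M"
    using int_Y by auto
  define A where "A = {\<omega>\<in>space M. real_cond_exp M F Y \<omega> \<le> 0}"
  have A_F: "A \<in> sets F"
    unfolding A_def by (rule real_cond_exp_nonpos_set)
  then have [measurable]: "A \<in> sets M"
    using subalg by (auto simp: subalgebra_def)
  have int_AY: "integrable M (\<lambda>\<omega>. indicator A \<omega> * Y \<omega>)"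
    using integrable_mult_indicator[OF _ int_Y] by simp
  have "(\<integral>\<omega>. indicator A \<omega> * Y \<omega> \<partial>M) = (\<integral>\<omega>. indicator A \<omega> * real_cond_exp M F Y \<omega> \<partial>M)"
    using A_F by (intro real_cond_exp_intg(2)[symmetric] int_AY) auto
  also have "\<dots> \<le> (\<integral>\<omega>. 0 \<partial>M)"
    by (rule integral_mono') (auto simp: A_def indicator_def)
  finally have "(\<integral>\<omega>. indicator A \<omega> * Y \<omega> \<partial>M) \<le> 0"
    by simp
  moreover have nonneg: "AE \<omega> in M. 0 \<le> indicator A \<omega> * Y \<omega>"
    using Y_nonneg by eventually_elim simp
  ultimately have "(\<integral>\<omega>. indicator A \<omega> * Y \<omega> \<partial>M) = 0"
    using integral_nonneg_AE[OF nonneg] by linarith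
  with nonneg have "AE \<omega> in M. indicator A \<omega> * Y \<omega> = 0"
    using integral_nonneg_eq_0_iff_AE[OF int_AY] by simp
  then show ?thesis
    using AE_space by eventually_elim (auto simp: A_def indicator_def split: if_splits)
qed

lemma real_cond_exp_indicator_pos:
  assumes "A \<in> sets M" "emeasure M A < \<infinity>"
  shows "AE \<omega> in M. \<omega> \<in> A \<longrightarrow> 0 < real_cond_exp M F (indicator A) \<omega>"
proof -
  have "integrable M (indicator A :: 'a \<Rightarrow> real)"
    using assms by (rule integrable_real_indicator)
  from real_cond_exp_nonpos_imp_eq_0[OF this] show ?thesis
    by (auto simp: indicator_def not_le)
qed

lemma real_cond_exp_support_mono:
  assumes int_W: "integrable M W" and int_Y: "integrable M Y"
    and W_nonneg: "AE \<omega> in M. 0 \<le> W \<omega>" and Y_nonneg: "AE \<omega> in M. 0 \<le> Y \<omega>"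
    and support: "AE \<omega> in M. 0 < W \<omega> \<longrightarrow> 0 < Y \<omega>"
  shows "AE \<omega> in M. 0 < real_cond_exp M F W \<omega> \<longrightarrow> 0 < real_cond_exp M F Y \<omega>"
proof -
  have [measurable]: "W \<in> borel_measurable M" "Y \<in> borel_measurable M"
    using int_W int_Y by auto
  define A where "A = {\<omega>\<in>space M. real_cond_exp M F Y \<omega> \<le> 0}"
  have A_F: "A \<in> sets F"
    unfolding A_def by (rule real_cond_exp_nonpos_set)
  then have [measurable]: "A \<in> sets M"
    using subalg by (auto simp: subalgebra_def)
  have "AE \<omega> in M. indicator A \<omega> * W \<omega> = 0"
    using real_cond_exp_nonpos_imp_eq_0[OF int_Y Y_nonneg] W_nonneg support
    by eventually_elim (auto simp: A_def indicator_def)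
  then have "AE \<omega> in M. real_cond_exp M F (\<lambda>\<omega>. indicator A \<omega> * W \<omega>) \<omega> = real_cond_exp M F (\<lambda>_. 0) \<omega>"
    by (intro real_cond_exp_cong) auto
  moreover have "AE \<omega> in M. real_cond_exp M F (\<lambda>_. 0) \<omega> = 0"
    by (rule real_cond_exp_F_meas) auto
  moreover have "AE \<omega> in M. real_cond_exp M F (\<lambda>\<omega>. indicator A \<omega> * W \<omega>) \<omega> = indicator A \<omega> * real_cond_exp M F W \<omega>"
    using A_F integrable_mult_indicator[OF \<open>A \<in> sets M\<close> int_W] by (intro real_cond_exp_mult) auto
  ultimately show ?thesis
    using AE_space by eventually_elim (auto simp: A_def indicator_def split: if_splits)
qed

end

subsection \<open>Nested \<sigma>-algebras\<close>

locale nested_subalgebras = prob_space M for M :: "'a measure" +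
  fixes F H :: "'a measure"
  assumes subalg_F: "subalgebra M F" and subalg_H: "subalgebra F H"
begin

lemma subalg_M_H: "subalgebra M H"
  using subalg_F subalg_H by (auto simp: subalgebra_def)

sublocale F: sigma_finite_subalgebra M F
  by (rule sigma_finite_subalgebra_if_subalgebra[OF subalg_F])

sublocale H: sigma_finite_subalgebra M H
  by (rule sigma_finite_subalgebra_if_subalgebra[OF subalg_M_H])

lemma sets_F_subset: "A \<in> sets F \<Longrightarrow> A \<in> sets M"
  using subalg_F by (auto simp: subalgebra_def)

text \<open>For integrable \<open>Y\<close> this is equivalent to \<open>E[Y|F] = E[Y|H]\<close>; moving the conditional
  expectation onto the indicator makes it linear in \<open>Y\<close> with weights bounded by 1, hence
  closed under dominated limits.\<close>

definition same_cond_exp :: "('a \<Rightarrow> real) \<Rightarrow> bool" where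
  "same_cond_exp Y \<longleftrightarrow> (\<forall>A\<in>sets F.
     (\<integral>x. indicator A x * Y x \<partial>M) = (\<integral>x. real_cond_exp M H (indicator A) x * Y x \<partial>M))"

lemma real_cond_exp_indicator_bounds:
  assumes "A \<in> sets M"
  shows "AE x in M. 0 \<le> real_cond_exp M H (indicator A) x \<and> real_cond_exp M H (indicator A) x \<le> 1"
proof -
  have "emeasure M A < \<top>"
    using emeasure_finite[of A] less_top by blast
  then have "integrable M (indicator A :: 'a \<Rightarrow> real)"
    using assms by (intro integrable_real_indicator) auto
  then have "AE x in M. 0 \<le> real_cond_exp M H (indicator A) x"
    and "AE x in M. real_cond_exp M H (indicator A) x \<le> 1"
    by (auto intro!: H.real_cond_exp_ge_c H.real_cond_exp_le_c simp: indicator_def)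
  then show ?thesis
    by auto
qed

lemma integrable_cond_exp_indicator_mult:
  assumes A: "A \<in> sets M" and int_Y: "integrable M Y"
  shows "integrable M (\<lambda>x. real_cond_exp M H (indicator A) x * Y x)"
proof (rule Bochner_Integration.integrable_bound[OF int_Y])
  show "(\<lambda>x. real_cond_exp M H (indicator A) x * Y x) \<in> borel_measurable M"
    using int_Y by measurable
  show "AE x in M. norm (real_cond_exp M H (indicator A) x * Y x) \<le> norm (Y x)"
    using real_cond_exp_indicator_bounds[OF A]
    by eventually_elim (simp add: abs_mult mult_left_le_one_le)
qed

lemma same_cond_exp_if_version:
  assumes int_Y: "integrable M Y" and h: "h \<in> borel_measurable H"
    and version: "AE x in M. real_cond_exp M F Y x = h x"
  shows "same_cond_exp Y"
  unfolding same_cond_exp_def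
proof
  fix A assume A_F: "A \<in> sets F"
  have [measurable]: "A \<in> sets M" "Y \<in> borel_measurable M" "h \<in> borel_measurable M"
    using sets_F_subset[OF A_F] int_Y measurable_from_subalg[OF subalg_M_H h] by auto
  have int_h: "integrable M h"
    using integrable_cong_AE_imp[OF F.real_cond_exp_int(1)[OF int_Y] _ version] by simp
  have "(\<integral>x. indicator A x * Y x \<partial>M) = (\<integral>x. indicator A x * real_cond_exp M F Y x \<partial>M)"
    using A_F integrable_mult_indicator[OF _ int_Y]
    by (intro F.real_cond_exp_intg(2)[symmetric]) auto
  also have "\<dots> = (\<integral>x. h x * indicator A x \<partial>M)"
    using version by (intro integral_cong_AE) auto
  also have "\<dots> = (\<integral>x. h x * real_cond_exp M H (indicator A) x \<partial>M)"
    using h integrable_real_mult_indicator[OF _ int_h]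
    by (intro H.real_cond_exp_intg(2)[symmetric]) auto
  also have "\<dots> = (\<integral>x. real_cond_exp M H (indicator A) x * real_cond_exp M F Y x \<partial>M)"
    using version by (intro integral_cong_AE) (auto simp: mult.commute)
  also have "\<dots> = (\<integral>x. real_cond_exp M H (indicator A) x * Y x \<partial>M)"
    using measurable_from_subalg[OF subalg_H borel_measurable_cond_exp]
    by (intro F.real_cond_exp_intg(2) integrable_cond_exp_indicator_mult int_Y) auto
  finally show "(\<integral>x. indicator A x * Y x \<partial>M) = (\<integral>x. real_cond_exp M H (indicator A) x * Y x \<partial>M)" .
qed

lemma real_cond_exp_eq_if_same_cond_exp:
  assumes int_Y: "integrable M Y" and same: "same_cond_exp Y"
  shows "AE x in M. real_cond_exp M F Y x = real_cond_exp M H Y x"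
proof (rule F.real_cond_exp_charact)
  fix A assume A_F: "A \<in> sets F"
  have [measurable]: "A \<in> sets M" "Y \<in> borel_measurable M"
    using sets_F_subset[OF A_F] int_Y by auto
  have int_EY: "integrable M (real_cond_exp M H Y)"
    by (rule H.real_cond_exp_int(1)[OF int_Y])
  have "(\<integral>x. indicator A x * real_cond_exp M H Y x \<partial>M) = (\<integral>x. real_cond_exp M H Y x * indicator A x \<partial>M)"
    by (simp add: mult.commute)
  also have "\<dots> = (\<integral>x. real_cond_exp M H Y x * real_cond_exp M H (indicator A) x \<partial>M)"
    using integrable_real_mult_indicator[OF _ int_EY]
    by (intro H.real_cond_exp_intg(2)[symmetric]) auto
  also have "\<dots> = (\<integral>x. real_cond_exp M H (indicator A) x * real_cond_exp M H Y x \<partial>M)"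
    by (simp add: mult.commute)
  also have "\<dots> = (\<integral>x. real_cond_exp M H (indicator A) x * Y x \<partial>M)"
    by (intro H.real_cond_exp_intg(2) integrable_cond_exp_indicator_mult int_Y) auto
  also have "\<dots> = (\<integral>x. indicator A x * Y x \<partial>M)"
    using same A_F by (simp add: same_cond_exp_def)
  finally show "(\<integral>x\<in>A. Y x \<partial>M) = (\<integral>x\<in>A. real_cond_exp M H Y x \<partial>M)"
    by (simp add: set_lebesgue_integral_def)
qed (use int_Y measurable_from_subalg[OF subalg_H borel_measurable_cond_exp] in auto)

lemma same_cond_exp_add:
  assumes int_u: "integrable M u" and int_v: "integrable M v"
    and "same_cond_exp u" "same_cond_exp v"
  shows "same_cond_exp (\<lambda>x. u x + v x)"
  unfolding same_cond_exp_def
proof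
  fix A assume A_F: "A \<in> sets F"
  then have A: "A \<in> sets M"
    by (rule sets_F_subset)
  have "(\<integral>x. indicator A x * (u x + v x) \<partial>M) = (\<integral>x. indicator A x * u x \<partial>M) + (\<integral>x. indicator A x * v x \<partial>M)"
    using integrable_mult_indicator[OF A int_u] integrable_mult_indicator[OF A int_v]
    by (simp add: distrib_left)
  also have "\<dots> = (\<integral>x. real_cond_exp M H (indicator A) x * u x \<partial>M) + (\<integral>x. real_cond_exp M H (indicator A) x * v x \<partial>M)"
    using assms A_F by (simp add: same_cond_exp_def)
  also have "\<dots> = (\<integral>x. real_cond_exp M H (indicator A) x * (u x + v x) \<partial>M)"
    using integrable_cond_exp_indicator_mult[OF A int_u] integrable_cond_exp_indicator_mult[OF A int_v]
    by (simp add: distrib_left)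
  finally show "(\<integral>x. indicator A x * (u x + v x) \<partial>M) = (\<integral>x. real_cond_exp M H (indicator A) x * (u x + v x) \<partial>M)" .
qed

lemma same_cond_exp_cmult: "same_cond_exp u \<Longrightarrow> same_cond_exp (\<lambda>x. c * u x)"
  by (simp add: same_cond_exp_def mult.left_commute[of _ c])

lemma same_cond_exp_cong:
  assumes "\<And>x. x \<in> space M \<Longrightarrow> u x = v x" and "same_cond_exp u"
  shows "same_cond_exp v"
proof -
  have "(\<integral>x. w x * u x \<partial>M) = (\<integral>x. w x * v x \<partial>M)" for w
    using assms(1) by (intro Bochner_Integration.integral_cong) auto
  then show ?thesis
    using assms(2) by (simp add: same_cond_exp_def)
qed

lemma same_cond_exp_limit:
  assumes U: "\<And>i. U i \<in> borel_measurable M" and int_u: "integrable M u"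
    and lim: "\<And>x. x \<in> space M \<Longrightarrow> (\<lambda>i. U i x) \<longlonglongrightarrow> u x"
    and bound: "\<And>i x. x \<in> space M \<Longrightarrow> \<bar>U i x\<bar> \<le> \<bar>u x\<bar>"
    and same: "\<And>i. same_cond_exp (U i)"
  shows "same_cond_exp u"
  unfolding same_cond_exp_def
proof
  fix A assume A_F: "A \<in> sets F"
  then have [measurable]: "A \<in> sets M"
    by (rule sets_F_subset)
  note [measurable] = U
  have [measurable]: "u \<in> borel_measurable M"
    using int_u by auto
  have "(\<lambda>i. \<integral>x. w x * U i x \<partial>M) \<longlonglongrightarrow> (\<integral>x. w x * u x \<partial>M)"
    if [measurable]: "w \<in> borel_measurable M" and w: "AE x in M. \<bar>w x\<bar> \<le> 1" for w
  proof (rule integral_dominated_convergence[where w="\<lambda>x. \<bar>u x\<bar>"])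
    show "AE x in M. (\<lambda>i. w x * U i x) \<longlonglongrightarrow> w x * u x"
      using lim by (intro AE_I2 tendsto_mult tendsto_const) auto
    show "AE x in M. norm (w x * U i x) \<le> \<bar>u x\<bar>" for i
      using w AE_space
    proof eventually_elim
      case (elim x)
      then have "\<bar>w x\<bar> * \<bar>U i x\<bar> \<le> 1 * \<bar>u x\<bar>"
        by (intro mult_mono) (auto simp: bound)
      then show ?case
        by (simp add: abs_mult)
    qed
  qed (use int_u in auto)
  moreover have "AE x in M. \<bar>real_cond_exp M H (indicator A) x\<bar> \<le> 1"
    using real_cond_exp_indicator_bounds[OF \<open>A \<in> sets M\<close>] by eventually_elim auto
  ultimately have "(\<lambda>i. \<integral>x. indicator A x * U i x \<partial>M) \<longlonglongrightarrow> (\<integral>x. indicator A x * u x \<partial>M)"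
    and "(\<lambda>i. \<integral>x. real_cond_exp M H (indicator A) x * U i x \<partial>M) \<longlonglongrightarrow> (\<integral>x. real_cond_exp M H (indicator A) x * u x \<partial>M)"
    by (auto simp: indicator_def)
  moreover have "(\<lambda>i. \<integral>x. indicator A x * U i x \<partial>M) = (\<lambda>i. \<integral>x. real_cond_exp M H (indicator A) x * U i x \<partial>M)"
    using same A_F by (simp add: same_cond_exp_def)
  ultimately show "(\<integral>x. indicator A x * u x \<partial>M) = (\<integral>x. real_cond_exp M H (indicator A) x * u x \<partial>M)"
    using LIMSEQ_unique by metis
qed

lemma same_cond_exp_if_indicators_nonneg:
  assumes subalg_K: "subalgebra M K"
    and indicators: "\<And>A. A \<in> sets K \<Longrightarrow>
      \<exists>h\<in>borel_measurable H. AE x in M. real_cond_exp M F (indicator A) x = h x"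
    and u: "u \<in> borel_measurable K" "\<And>x. 0 \<le> u x"
  shows "integrable M u \<longrightarrow> same_cond_exp u"
  using u
proof (induct rule: borel_measurable_induct_real)
  case (set A)
  then show ?case
    using indicators same_cond_exp_if_version by blast
next
  case (mult u c)
  show ?case
  proof
    assume int_cu: "integrable M (\<lambda>x. c * u x)"
    show "same_cond_exp (\<lambda>x. c * u x)"
    proof (cases "c = 0")
      case False
      then have "integrable M u"
        using int_cu by simp
      then show ?thesis
        using mult by (intro same_cond_exp_cmult) auto
    qed (simp add: same_cond_exp_def)
  qed
next
  case (add u v)
  have [measurable]: "u \<in> borel_measurable M" "v \<in> borel_measurable M"
    using measurable_from_subalg[OF subalg_K] add by auto
  show ?case
  proof
    assume int_uv: "integrable M (\<lambda>x. v x + u x)"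
    have "integrable M u" "integrable M v"
      by (auto intro: Bochner_Integration.integrable_bound[OF int_uv] simp: add.hyps)
    then show "same_cond_exp (\<lambda>x. v x + u x)"
      using add same_cond_exp_add by blast
  qed
next
  case (seq U)
  have U: "U i \<in> borel_measurable M" for i
    using measurable_from_subalg[OF subalg_K seq(1)] .
  have space_K: "space K = space M"
    using subalg_K by (simp add: subalgebra_def)
  show ?case
  proof
    assume int_u: "integrable M u"
    have "U i x \<le> u x" if "x \<in> space M" for i x
      using seq(4,5) that incseq_le[of "\<lambda>i. U i x"] by (auto simp: incseq_def le_fun_def space_K)
    then have bound: "\<bar>U i x\<bar> \<le> \<bar>u x\<bar>" if "x \<in> space M" for i x
      using seq(2) that by (metis abs_of_nonneg order.trans)
    have "integrable M (U i)" for i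
      using bound by (intro Bochner_Integration.integrable_bound[OF int_u U]) auto
    then show "same_cond_exp u"
      using seq(3,5) bound by (intro same_cond_exp_limit[OF U int_u]) (auto simp: space_K)
  qed
qed

theorem real_cond_exp_eq_if_indicators:
  assumes subalg_K: "subalgebra M K"
    and indicators: "\<And>A. A \<in> sets K \<Longrightarrow>
      \<exists>h\<in>borel_measurable H. AE x in M. real_cond_exp M F (indicator A) x = h x"
    and Y: "Y \<in> borel_measurable K" and int_Y: "integrable M Y"
  shows "AE x in M. real_cond_exp M F Y x = real_cond_exp M H Y x"
proof -
  note nonneg = same_cond_exp_if_indicators_nonneg[OF subalg_K indicators]
  have [measurable]: "Y \<in> borel_measurable K"
    by (rule Y)
  have "same_cond_exp (\<lambda>x. max 0 (Y x))" "same_cond_exp (\<lambda>x. max 0 (- Y x))"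
    using nonneg int_Y by auto
  then have "same_cond_exp (\<lambda>x. max 0 (Y x) + - 1 * max 0 (- Y x))"
    using int_Y by (intro same_cond_exp_add same_cond_exp_cmult) auto
  then have "same_cond_exp Y"
    by (rule same_cond_exp_cong[rotated]) auto
  then show ?thesis
    by (rule real_cond_exp_eq_if_same_cond_exp[OF int_Y])
qed

end

lemma equilibrium_early_iff:
  "equilibrium_early M F T X B \<delta> g \<theta> \<longleftrightarrow> admissible M F T X B \<theta> \<and>
     (\<forall>t\<le>T. AE \<omega> in M. \<theta> t \<omega> =
        (t < eff_horizon M F T X B \<omega> \<longrightarrow> Jval M F T X B \<delta> g \<theta> t \<omega> \<le> Gval \<delta> g X t \<omega>))"
  (is "_ \<longleftrightarrow> _ \<and> (\<forall>t\<le>T. AE \<omega> in M. \<theta> t \<omega> = ?rule t \<omega>)")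
proof -
  have pointwise: "Phi M F T X B \<delta> g \<theta> t \<omega> = \<theta> t \<omega> \<and>
      (t < eff_horizon M F T X B \<omega> \<and> Gval \<delta> g X t \<omega> = Jval M F T X B \<delta> g \<theta> t \<omega> \<longrightarrow> \<theta> t \<omega>)
      \<longleftrightarrow> \<theta> t \<omega> = ?rule t \<omega>"
    if "eff_horizon M F T X B \<omega> \<le> t \<longrightarrow> \<theta> t \<omega>" for t \<omega>
    using that by (auto simp: Phi_def)
  have "(AE \<omega> in M. Phi M F T X B \<delta> g \<theta> t \<omega> = \<theta> t \<omega>) \<and>
        (AE \<omega> in M. t < eff_horizon M F T X B \<omega> \<and> Gval \<delta> g X t \<omega> = Jval M F T X B \<delta> g \<theta> t \<omega> \<longrightarrow> \<theta> t \<omega>)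
      \<longleftrightarrow> (AE \<omega> in M. \<theta> t \<omega> = ?rule t \<omega>)"
    if tail: "AE \<omega> in M. eff_horizon M F T X B \<omega> \<le> t \<longrightarrow> \<theta> t \<omega>" for t
  proof (intro iffI conjI; (elim conjE)?)
    assume "AE \<omega> in M. Phi M F T X B \<delta> g \<theta> t \<omega> = \<theta> t \<omega>"
      and "AE \<omega> in M. t < eff_horizon M F T X B \<omega> \<and> Gval \<delta> g X t \<omega> = Jval M F T X B \<delta> g \<theta> t \<omega> \<longrightarrow> \<theta> t \<omega>"
    with tail show "AE \<omega> in M. \<theta> t \<omega> = ?rule t \<omega>"
      by eventually_elim (use pointwise in blast)
  next
    assume "AE \<omega> in M. \<theta> t \<omega> = ?rule t \<omega>"
    with tail show "AE \<omega> in M. Phi M F T X B \<delta> g \<theta> t \<omega> = \<theta> t \<omega>"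
      and "AE \<omega> in M. t < eff_horizon M F T X B \<omega> \<and> Gval \<delta> g X t \<omega> = Jval M F T X B \<delta> g \<theta> t \<omega> \<longrightarrow> \<theta> t \<omega>"
      by (eventually_elim, use pointwise in blast)+
  qed
  then show ?thesis
    unfolding equilibrium_early_def equilibrium_def admissible_def by blast
qed

section \<open>The Markovian setting\<close>

locale markov_stopping =
  fixes M :: "'a measure" and F :: "nat \<Rightarrow> 'a measure" and T :: nat
    and X :: "nat \<Rightarrow> 'a \<Rightarrow> 'x::{metric_space, second_countable_topology}"
    and B :: "'x set" and \<delta> :: real and g :: "nat \<Rightarrow> 'x \<Rightarrow> real"
  assumes prob: "prob_space M"
    and filt_sub: "\<forall>t\<le>T. subalgebra M (F t)"
    and filt_mono: "\<forall>s t. s \<le> t \<longrightarrow> t \<le> T \<longrightarrow> sets (F s) \<subseteq> sets (F t)"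
    and markov: "markov_chain M F T X"
    and B_meas: "B \<in> sets borel"
    and g_meas: "\<forall>t\<le>T. g t \<in> borel_measurable borel"
    and integr: "integrable M (\<lambda>\<omega>. Max ((\<lambda>t. \<bar>Gval \<delta> g X t \<omega>\<bar> * indicator (Dset M T X B t) \<omega>) ` {0..T}))"
begin

sublocale prob_space M
  by (rule prob)

abbreviation "D t \<equiv> Dset M T X B t"
abbreviation "G t \<equiv> Gval \<delta> g X t"
abbreviation "G_bound \<equiv> \<lambda>\<omega>. Max ((\<lambda>t. \<bar>G t \<omega>\<bar> * indicator (D t) \<omega>) ` {0..T})"
abbreviation "N \<theta> t \<equiv> stopped_payoff T X B \<delta> g \<theta> t"
abbreviation "Q \<theta> t \<equiv> (indicator (stop_before_exit M T X B \<theta> t) :: 'a \<Rightarrow> real)"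
abbreviation "J \<theta> t \<equiv> Jval M F T X B \<delta> g \<theta> t"
abbreviation "T\<^sub>e \<equiv> eff_horizon M F T X B"
abbreviation "X_alg t \<equiv> vimage_algebra (space M) (X t) borel"
abbreviation "XD_alg t s \<equiv> vimage_algebra (space M) (\<lambda>\<omega>. (X t \<omega>, indicator (D s) \<omega> :: real)) (borel \<Otimes>\<^sub>M borel)"
abbreviation "state_alg t \<equiv> XD_alg t t"

lemma subalg_F: "t \<le> T \<Longrightarrow> subalgebra M (F t)"
  using filt_sub by auto

lemma space_F [simp]: "t \<le> T \<Longrightarrow> space (F t) = space M"
  using subalg_F by (auto simp: subalgebra_def)

lemma subalg_F_mono: "s \<le> t \<Longrightarrow> t \<le> T \<Longrightarrow> subalgebra (F t) (F s)"
  using filt_mono by (auto simp: subalgebra_def)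

lemma sigma_finite_F: "t \<le> T \<Longrightarrow> sigma_finite_subalgebra M (F t)"
  by (rule sigma_finite_subalgebra_if_subalgebra[OF subalg_F])

lemma X_measurable_F: "t \<le> T \<Longrightarrow> X t \<in> borel_measurable (F t)"
  using markov by (auto simp: markov_chain_def)

lemma D_eq: "t \<le> T \<Longrightarrow> D t = {\<omega>\<in>space M. \<forall>s\<le>t. X s \<omega> \<in> B}"
  by (auto simp: Dset_def enat_less_exit_time_iff)

lemma D_subset_space: "D t \<subseteq> space M"
  by (auto simp: Dset_def)

lemma D_Suc: "Suc t \<le> T \<Longrightarrow> D (Suc t) = D t \<inter> {\<omega>. X (Suc t) \<omega> \<in> B}"
  using D_eq[of "Suc t"] D_eq[of t] by (auto simp: le_Suc_eq)

lemma indicator_D_Suc: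
  "Suc t \<le> T \<Longrightarrow> indicator (D (Suc t)) \<omega> = indicator (D t) \<omega> * (indicator B (X (Suc t) \<omega>) :: real)"
  using D_Suc by (auto simp: indicator_def)

lemma D_antimono: "s \<le> t \<Longrightarrow> t \<le> T \<Longrightarrow> D t \<subseteq> D s"
  using D_eq[of s] D_eq[of t] by auto

lemma D_in_F:
  assumes st: "s \<le> t" and tT: "t \<le> T"
  shows "D s \<in> sets (F t)"
proof -
  have "{\<omega>\<in>space (F t). X r \<omega> \<in> B} \<in> sets (F t)" if "r \<in> {..s}" for r
  proof -
    have rt: "r \<le> t"
      using that st by simp
    have "X r \<in> borel_measurable (F t)"
      using measurable_from_subalg[OF subalg_F_mono[OF rt tT] X_measurable_F] rt tT by simp
    from measurable_sets[OF this B_meas] show ?thesis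
      by (simp add: vimage_def Int_def conj_ac)
  qed
  then have "{\<omega>\<in>space (F t). \<forall>r\<in>{..s}. X r \<omega> \<in> B} \<in> sets (F t)"
    by (intro sets.sets_Collect_finite_All') auto
  moreover have "D s = {\<omega>\<in>space (F t). \<forall>r\<in>{..s}. X r \<omega> \<in> B}"
    using D_eq[of s] st tT by auto
  ultimately show ?thesis
    by (simp only:)
qed

lemma D_in_sets: "t \<le> T \<Longrightarrow> D t \<in> sets M"
  using D_in_F[of t t] subalg_F by (auto simp: subalgebra_def)

lemma subalg_F_XD:
  assumes "s \<le> t" "t \<le> T"
  shows "subalgebra (F t) (XD_alg t s)"
proof -
  have "(\<lambda>\<omega>. (X t \<omega>, indicator (D s) \<omega> :: real)) \<in> F t \<rightarrow>\<^sub>M borel \<Otimes>\<^sub>M borel"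
    using assms X_measurable_F D_in_F by (intro measurable_Pair) auto
  from sets_image_in_sets[OF _ this] show ?thesis
    using assms by (simp add: subalgebra_def)
qed

lemma subalg_XD: "s \<le> t \<Longrightarrow> t \<le> T \<Longrightarrow> subalgebra M (XD_alg t s)"
  using subalg_F_XD[of s t] subalg_F[of t] by (auto simp: subalgebra_def)

lemma measurable_XD: "(\<lambda>\<omega>. (X t \<omega>, indicator (D s) \<omega> :: real)) \<in> XD_alg t s \<rightarrow>\<^sub>M borel \<Otimes>\<^sub>M borel"
  by (rule measurable_vimage_algebra1) (auto simp: space_pair_measure)

lemma X_measurable_XD: "X t \<in> borel_measurable (XD_alg t s)"
  using measurable_compose[OF measurable_XD measurable_fst] by (simp add: comp_def)

lemma indicator_D_measurable_XD: "(indicator (D s) :: 'a \<Rightarrow> real) \<in> borel_measurable (XD_alg t s)"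
  using measurable_compose[OF measurable_XD measurable_snd] by (simp add: comp_def)

lemma D_in_XD: "D s \<in> sets (XD_alg t s)"
proof -
  have "{\<omega>\<in>space (XD_alg t s). indicator (D s) \<omega> = (1::real)} \<in> sets (XD_alg t s)"
    using indicator_D_measurable_XD[of s t] by measurable
  moreover have "{\<omega>\<in>space (XD_alg t s). indicator (D s) \<omega> = (1::real)} = D s"
    using D_subset_space by (auto simp: indicator_eq_1_iff)
  ultimately show ?thesis
    by simp
qed

lemma subalg_XD_X_alg: "subalgebra (XD_alg t s) (X_alg t)"
proof -
  have "sets (X_alg t) \<subseteq> sets (XD_alg t s)"
    by (rule sets_image_in_sets) (auto intro: X_measurable_XD)
  then show ?thesis
    by (simp add: subalgebra_def)
qed

lemma indicator_D_Suc_measurable_XD: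
  assumes "Suc t \<le> T"
  shows "(indicator (D (Suc t)) :: 'a \<Rightarrow> real) \<in> borel_measurable (XD_alg (Suc t) t)"
proof -
  have "(\<lambda>\<omega>. indicator (D t) \<omega> * (indicator B (X (Suc t) \<omega>) :: real)) \<in> borel_measurable (XD_alg (Suc t) t)"
    using indicator_D_measurable_XD X_measurable_XD B_meas by measurable
  moreover have "(indicator (D (Suc t)) :: 'a \<Rightarrow> real) = (\<lambda>\<omega>. indicator (D t) \<omega> * indicator B (X (Suc t) \<omega>))"
    using indicator_D_Suc[OF assms] by (simp add: fun_eq_iff)
  ultimately show ?thesis
    by simp
qed

lemma subalg_XD_state_alg_Suc:
  assumes "Suc t \<le> T"
  shows "subalgebra (XD_alg (Suc t) t) (state_alg (Suc t))"
proof -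
  have "(\<lambda>\<omega>. (X (Suc t) \<omega>, indicator (D (Suc t)) \<omega> :: real)) \<in> XD_alg (Suc t) t \<rightarrow>\<^sub>M borel \<Otimes>\<^sub>M borel"
    using X_measurable_XD indicator_D_Suc_measurable_XD[OF assms] by (intro measurable_Pair)
  then have "sets (state_alg (Suc t)) \<subseteq> sets (XD_alg (Suc t) t)"
    by (intro sets_image_in_sets) auto
  then show ?thesis
    by (simp add: subalgebra_def)
qed

lemma indicator_XD_split:
  assumes "A \<in> sets (XD_alg t s)"
  obtains C1 C0 where "C1 \<in> sets borel" "C0 \<in> sets borel"
    and "\<And>\<omega>. \<omega> \<in> space M \<Longrightarrow> (indicator A \<omega> :: real) =
      indicator (D s) \<omega> * indicator C1 (X t \<omega>) + indicator (space M - D s) \<omega> * indicator C0 (X t \<omega>)"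
proof -
  have "sets (XD_alg t s) = {(\<lambda>\<omega>. (X t \<omega>, indicator (D s) \<omega> :: real)) -` C \<inter> space M
      | C. C \<in> sets (borel \<Otimes>\<^sub>M borel)}"
    by (rule sets_vimage_algebra2) (auto simp: space_pair_measure)
  then obtain C where C: "C \<in> sets (borel \<Otimes>\<^sub>M borel)"
    and A_eq: "A = (\<lambda>\<omega>. (X t \<omega>, indicator (D s) \<omega> :: real)) -` C \<inter> space M"
    using assms by auto
  have "(\<lambda>y. (y, c)) \<in> borel \<rightarrow>\<^sub>M borel \<Otimes>\<^sub>M borel" for c :: real
    by measurable
  from measurable_sets[OF this C]
  have "(\<lambda>y. (y, 1::real)) -` C \<in> sets borel" "(\<lambda>y. (y, 0::real)) -` C \<in> sets borel"
    by simp_all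
  then show ?thesis
    by (rule that) (auto simp: A_eq indicator_def)
qed

lemma G_measurable_XD:
  assumes "t \<le> T"
  shows "G t \<in> borel_measurable (XD_alg t s)"
proof -
  have [measurable]: "X t \<in> borel_measurable (XD_alg t s)" "g t \<in> borel_measurable borel"
    using X_measurable_XD g_meas assms by auto
  show ?thesis
    unfolding Gval_def by measurable
qed

lemma G_measurable: "t \<le> T \<Longrightarrow> G t \<in> borel_measurable M"
  using measurable_from_subalg[OF subalg_XD G_measurable_XD] by blast

subsection \<open>The Markov property\<close>

lemma real_cond_exp_F_indicator_mult_version:
  assumes t: "t < T" and S: "S \<in> sets (state_alg t)" and C: "C \<in> sets borel"
  shows "\<exists>h\<in>borel_measurable (state_alg t).
    AE \<omega> in M. real_cond_exp M (F t) (\<lambda>\<omega>. indicator S \<omega> * indicator C (X (Suc t) \<omega>)) \<omega> = h \<omega>"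
proof -
  interpret Ft: sigma_finite_subalgebra M "F t"
    using t by (intro sigma_finite_F) simp
  have [measurable]: "X (Suc t) \<in> borel_measurable M" "C \<in> sets borel"
    using t C measurable_from_subalg[OF subalg_F X_measurable_F] by auto
  have S_F: "S \<in> sets (F t)"
    using S subalg_F_XD[of t t] t by (auto simp: subalgebra_def)
  then have [measurable]: "S \<in> sets M"
    using subalg_F[of t] t by (auto simp: subalgebra_def)
  have "AE \<omega> in M. real_cond_exp M (F t) (\<lambda>\<omega>. indicator S \<omega> * indicator C (X (Suc t) \<omega>)) \<omega> =
      indicator S \<omega> * real_cond_exp M (F t) (\<lambda>\<omega>. indicator C (X (Suc t) \<omega>)) \<omega>"
    using S_F by (intro Ft.real_cond_exp_mult integrable_const_bound[where B=1]) (auto simp: indicator_def)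
  moreover have "AE \<omega> in M. real_cond_exp M (F t) (\<lambda>\<omega>. indicator C (X (Suc t) \<omega>)) \<omega> =
      real_cond_exp M (X_alg t) (\<lambda>\<omega>. indicator C (X (Suc t) \<omega>)) \<omega>"
    using markov t C by (auto simp: markov_chain_def)
  moreover have "(\<lambda>\<omega>. indicator S \<omega> * real_cond_exp M (X_alg t) (\<lambda>\<omega>. indicator C (X (Suc t) \<omega>)) \<omega>)
      \<in> borel_measurable (state_alg t)"
    using S measurable_from_subalg[OF subalg_XD_X_alg borel_measurable_cond_exp]
    by (intro borel_measurable_times borel_measurable_indicator)
  ultimately show ?thesis
    by (intro bexI) (auto elim: eventually_mono)
qed

lemma real_cond_exp_F_indicator_version:
  assumes t: "t < T" and A: "A \<in> sets (XD_alg (Suc t) t)"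
  shows "\<exists>h\<in>borel_measurable (state_alg t). AE \<omega> in M. real_cond_exp M (F t) (indicator A) \<omega> = h \<omega>"
proof -
  interpret Ft: sigma_finite_subalgebra M "F t"
    using t by (intro sigma_finite_F) simp
  obtain C1 C0 where [measurable]: "C1 \<in> sets borel" "C0 \<in> sets borel"
    and A_split: "\<And>\<omega>. \<omega> \<in> space M \<Longrightarrow> (indicator A \<omega> :: real) =
      indicator (D t) \<omega> * indicator C1 (X (Suc t) \<omega>) + indicator (space M - D t) \<omega> * indicator C0 (X (Suc t) \<omega>)"
    using indicator_XD_split[OF A] by blast
  define p1 :: "'a \<Rightarrow> real" where "p1 \<omega> = indicator (D t) \<omega> * indicator C1 (X (Suc t) \<omega>)" for \<omega>
  define p0 :: "'a \<Rightarrow> real" where "p0 \<omega> = indicator (space M - D t) \<omega> * indicator C0 (X (Suc t) \<omega>)" for \<omega>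
  have "space M - D t \<in> sets (state_alg t)"
    using sets.compl_sets[OF D_in_XD] by simp
  then obtain h1 h0 where h: "h1 \<in> borel_measurable (state_alg t)" "h0 \<in> borel_measurable (state_alg t)"
    and h_version: "AE \<omega> in M. real_cond_exp M (F t) p1 \<omega> = h1 \<omega>" "AE \<omega> in M. real_cond_exp M (F t) p0 \<omega> = h0 \<omega>"
    unfolding p1_def p0_def
    using real_cond_exp_F_indicator_mult_version[OF t D_in_XD, of C1]
      real_cond_exp_F_indicator_mult_version[OF t _, of "space M - D t" C0] by auto
  have [measurable]: "X (Suc t) \<in> borel_measurable M" "D t \<in> sets M" "A \<in> sets M"
    using t A measurable_from_subalg[OF subalg_F X_measurable_F] D_in_sets subalg_XD[of t "Suc t"]
    by (auto simp: subalgebra_def)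
  then have [measurable]: "p1 \<in> borel_measurable M" "p0 \<in> borel_measurable M"
    unfolding p1_def p0_def by measurable
  have "AE \<omega> in M. indicator A \<omega> = p1 \<omega> + p0 \<omega>"
    using A_split by (intro AE_I2) (simp add: p1_def p0_def)
  then have "AE \<omega> in M. real_cond_exp M (F t) (indicator A) \<omega> = real_cond_exp M (F t) (\<lambda>\<omega>. p1 \<omega> + p0 \<omega>) \<omega>"
    by (rule Ft.real_cond_exp_cong) measurable
  moreover have "AE \<omega> in M. real_cond_exp M (F t) (\<lambda>\<omega>. p1 \<omega> + p0 \<omega>) \<omega> =
      real_cond_exp M (F t) p1 \<omega> + real_cond_exp M (F t) p0 \<omega>"
    unfolding p1_def p0_def
    by (intro Ft.real_cond_exp_add integrable_const_bound[where B=1]) (auto simp: indicator_def)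
  ultimately have "AE \<omega> in M. real_cond_exp M (F t) (indicator A) \<omega> = h1 \<omega> + h0 \<omega>"
    using h_version by eventually_elim simp
  with h show ?thesis
    by (intro bexI[of _ "\<lambda>\<omega>. h1 \<omega> + h0 \<omega>"] borel_measurable_add)
qed

theorem real_cond_exp_F_eq_state_alg:
  assumes t: "t < T" and Y: "Y \<in> borel_measurable (XD_alg (Suc t) t)" and int_Y: "integrable M Y"
  shows "AE \<omega> in M. real_cond_exp M (F t) Y \<omega> = real_cond_exp M (state_alg t) Y \<omega>"
proof -
  interpret nested_subalgebras M "F t" "state_alg t"
    using t by unfold_locales (auto intro: subalg_F subalg_F_XD)
  have "subalgebra M (XD_alg (Suc t) t)"
    using t by (intro subalg_XD) auto
  from real_cond_exp_eq_if_indicators[OF this real_cond_exp_F_indicator_version[OF t] Y int_Y]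
  show ?thesis .
qed

subsection \<open>Survival probability and the effective horizon\<close>

definition surv_prob :: "nat \<Rightarrow> 'a \<Rightarrow> real" where
  "surv_prob t = real_cond_exp M (state_alg t) (indicator (D (Suc t)))"

lemma surv_prob_measurable: "surv_prob t \<in> borel_measurable (state_alg t)"
  by (simp add: surv_prob_def)

lemma emeasure_D_less_top: "emeasure M (D t) < \<infinity>"
  by (simp add: less_top[symmetric])

lemma integrable_indicator_D: "t \<le> T \<Longrightarrow> integrable M (indicator (D t) :: 'a \<Rightarrow> real)"
  by (intro integrable_real_indicator D_in_sets emeasure_D_less_top)

lemma sigma_finite_state_alg: "t \<le> T \<Longrightarrow> sigma_finite_subalgebra M (state_alg t)"
  by (rule sigma_finite_subalgebra_if_subalgebra[OF subalg_XD]) auto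

lemma real_cond_exp_F_survival:
  "t < T \<Longrightarrow> AE \<omega> in M. real_cond_exp M (F t) (indicator (D (Suc t))) \<omega> = surv_prob t \<omega>"
  unfolding surv_prob_def
  by (rule real_cond_exp_F_eq_state_alg[OF _ indicator_D_Suc_measurable_XD integrable_indicator_D]) auto

lemma surv_prob_nonneg: "t < T \<Longrightarrow> AE \<omega> in M. 0 \<le> surv_prob t \<omega>"
proof -
  assume "t < T"
  then interpret state: sigma_finite_subalgebra M "state_alg t"
    by (intro sigma_finite_state_alg) simp
  show ?thesis
    unfolding surv_prob_def
    using \<open>t < T\<close> by (intro state.real_cond_exp_ge_c integrable_indicator_D) auto
qed

lemma surv_prob_outside_D: "t < T \<Longrightarrow> AE \<omega> in M. \<omega> \<notin> D t \<longrightarrow> surv_prob t \<omega> = 0"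
proof -
  assume t: "t < T"
  then interpret state: sigma_finite_subalgebra M "state_alg t"
    by (intro sigma_finite_state_alg) simp
  have [measurable]: "X (Suc t) \<in> borel_measurable M" "D t \<in> sets M" "B \<in> sets borel"
    using t measurable_from_subalg[OF subalg_F X_measurable_F] D_in_sets B_meas by auto
  have "AE \<omega> in M. surv_prob t \<omega> =
      indicator (D t) \<omega> * real_cond_exp M (state_alg t) (\<lambda>\<omega>. indicator B (X (Suc t) \<omega>)) \<omega>"
    unfolding surv_prob_def indicator_D_Suc[of t, OF Suc_leI[OF t]]
    by (intro state.real_cond_exp_mult borel_measurable_indicator D_in_XD
        integrable_const_bound[where B=1]) (auto simp: indicator_def)
  then show ?thesis
    by eventually_elim simp
qed

lemma surv_prob_pos: "t < T \<Longrightarrow> AE \<omega> in M. \<omega> \<in> D (Suc t) \<longrightarrow> 0 < surv_prob t \<omega>"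
proof -
  assume t: "t < T"
  then interpret state: sigma_finite_subalgebra M "state_alg t"
    by (intro sigma_finite_state_alg) simp
  show ?thesis
    unfolding surv_prob_def
    using t by (intro state.real_cond_exp_indicator_pos D_in_sets emeasure_D_less_top) simp
qed

lemma all_surv_prob_neq_0_iff:
  assumes t: "t < T"
    and outside: "\<forall>s<T. \<omega> \<notin> D s \<longrightarrow> surv_prob s \<omega> = 0"
    and inside: "\<forall>s<T. \<omega> \<in> D (Suc s) \<longrightarrow> 0 < surv_prob s \<omega>"
  shows "(\<forall>s\<le>t. surv_prob s \<omega> \<noteq> 0) \<longleftrightarrow> \<omega> \<in> D t \<and> surv_prob t \<omega> \<noteq> 0"
proof (intro iffI allI impI)
  assume \<omega>: "\<omega> \<in> D t \<and> surv_prob t \<omega> \<noteq> 0"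
  fix s assume "s \<le> t"
  show "surv_prob s \<omega> \<noteq> 0"
  proof (cases "s = t")
    case False
    then have "\<omega> \<in> D (Suc s)"
      using D_antimono[of "Suc s" t] \<omega> \<open>s \<le> t\<close> t by auto
    moreover have "s < T"
      using \<open>s \<le> t\<close> t by simp
    ultimately show ?thesis
      using inside by fastforce
  qed (use \<omega> in simp)
qed (use t outside in auto)

lemma less_eff_horizon_AE_iff:
  "AE \<omega> in M. \<forall>t\<le>T. t < T\<^sub>e \<omega> \<longleftrightarrow> t < T \<and> \<omega> \<in> D t \<and> surv_prob t \<omega> \<noteq> 0"
proof -
  have "AE \<omega> in M. \<forall>s<T. cprob M (F s) (D (Suc s)) \<omega> = surv_prob s \<omega>"
    using D_subset_space
    by (auto simp: AE_all_countable cprob_def Int_absorb2 intro: real_cond_exp_F_survival)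
  moreover have "AE \<omega> in M. \<forall>s<T. \<omega> \<notin> D s \<longrightarrow> surv_prob s \<omega> = 0"
    by (auto simp: AE_all_countable intro: surv_prob_outside_D)
  moreover have "AE \<omega> in M. \<forall>s<T. \<omega> \<in> D (Suc s) \<longrightarrow> 0 < surv_prob s \<omega>"
    by (auto simp: AE_all_countable intro: surv_prob_pos)
  ultimately show ?thesis
  proof eventually_elim
    case (elim \<omega>)
    show ?case
    proof (intro allI impI)
      fix t assume "t \<le> T"
      show "t < T\<^sub>e \<omega> \<longleftrightarrow> t < T \<and> \<omega> \<in> D t \<and> surv_prob t \<omega> \<noteq> 0"
      proof (cases "t < T")
        case True
        have "cprob M (F s) (D (Suc s)) \<omega> = surv_prob s \<omega>" if "s \<le> t" for s
          using elim(1) True that by simp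
        then show ?thesis
          using all_surv_prob_neq_0_iff[OF True elim(2,3)] True by (simp add: less_eff_horizon_iff)
      qed (simp add: less_eff_horizon_iff)
    qed
  qed
qed

subsection \<open>One-step recursion of the stopped payoff\<close>

lemma stop_before_exit_horizon: "stop_before_exit M T X B \<theta> T = D T"
  by (auto simp: stop_before_exit_def Dset_def enat_horizon_less_exit_time_iff)

lemma D_if_lhd_next_stop:
  assumes "\<omega> \<in> space M" "lhd (next_stop T \<theta> t \<omega>) (exit_time T X B \<omega>)"
  shows "\<omega> \<in> D t"
proof (cases "next_stop T \<theta> t \<omega>")
  case (enat s)
  then have "enat t < enat s"
    using next_stop_eq_enatD[OF enat] by simp
  also have "\<dots> < exit_time T X B \<omega>"
    using assms(2) enat by simp
  finally show ?thesis
    using assms(1) by (simp add: Dset_def)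
qed (use assms in \<open>simp add: Dset_def\<close>)

lemma Q_Suc:
  assumes "t < T" "\<omega> \<in> space M"
  shows "Q \<theta> t \<omega> = indicator (D (Suc t)) \<omega> * (if \<theta> (Suc t) \<omega> then 1 else Q \<theta> (Suc t) \<omega>)"
  using assms D_if_lhd_next_stop[OF assms(2), of \<theta> "Suc t"]
  by (auto simp: stop_before_exit_def next_stop_Suc Dset_def indicator_def)

lemma N_Suc:
  assumes "t < T" "\<omega> \<in> space M"
  shows "N \<theta> t \<omega> = indicator (D (Suc t)) \<omega> * (if \<theta> (Suc t) \<omega> then G (Suc t) \<omega> else N \<theta> (Suc t) \<omega>)"
  using assms D_if_lhd_next_stop[OF assms(2), of \<theta> "Suc t"]
  by (auto simp: stopped_payoff_def next_stop_Suc Dset_def indicator_def)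

lemma abs_G_le_G_bound:
  assumes "s \<le> T" "\<omega> \<in> D s"
  shows "\<bar>G s \<omega>\<bar> \<le> G_bound \<omega>"
proof -
  have "\<bar>G s \<omega>\<bar> * indicator (D s) \<omega> \<le> G_bound \<omega>"
    using assms(1) by (intro Max_ge) auto
  then show ?thesis
    using assms(2) by simp
qed

lemma G_bound_nonneg: "0 \<le> G_bound \<omega>"
proof -
  have "\<bar>G 0 \<omega>\<bar> * indicator (D 0) \<omega> \<le> G_bound \<omega>"
    by (intro Max_ge) auto
  moreover have "0 \<le> \<bar>G 0 \<omega>\<bar> * indicator (D 0) \<omega>"
    by simp
  ultimately show ?thesis
    by linarith
qed

lemma abs_N_le_G_bound:
  assumes "\<omega> \<in> space M"
  shows "\<bar>N \<theta> t \<omega>\<bar> \<le> G_bound \<omega>"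
proof (cases "next_stop T \<theta> t \<omega>")
  case (enat s)
  show ?thesis
  proof (cases "enat s < exit_time T X B \<omega>")
    case True
    then have "\<omega> \<in> D s"
      using assms by (simp add: Dset_def)
    then show ?thesis
      using enat True abs_G_le_G_bound[of s] next_stop_eq_enatD[OF enat]
      by (simp add: stopped_payoff_def)
  qed (use enat G_bound_nonneg in \<open>simp add: stopped_payoff_def\<close>)
qed (simp add: stopped_payoff_def G_bound_nonneg)

lemma N_Q_measurable:
  assumes \<theta>: "stopping_policy F T \<theta>" and t: "t \<le> T"
  shows "N \<theta> t \<in> borel_measurable M \<and> Q \<theta> t \<in> borel_measurable M"
  using t
proof (induction t rule: inc_induct)
  case base
  have "N \<theta> T = (\<lambda>_. 0)"
    by (simp add: stopped_payoff_def fun_eq_iff)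
  then show ?case
    using D_in_sets[of T] by (simp add: stop_before_exit_horizon)
next
  case (step t)
  have "\<theta> (Suc t) \<in> F (Suc t) \<rightarrow>\<^sub>M count_space UNIV"
    using \<theta> step(2) by (simp add: stopping_policy_def)
  from measurable_from_subalg[OF subalg_F this] step(2)
  have [measurable]: "\<theta> (Suc t) \<in> M \<rightarrow>\<^sub>M count_space UNIV"
    by simp
  have [measurable]: "G (Suc t) \<in> borel_measurable M" "D (Suc t) \<in> sets M"
    using step(2) G_measurable D_in_sets by auto
  have [measurable]: "N \<theta> (Suc t) \<in> borel_measurable M" "Q \<theta> (Suc t) \<in> borel_measurable M"
    using step(3) by auto
  have "(\<lambda>\<omega>. indicator (D (Suc t)) \<omega> * (if \<theta> (Suc t) \<omega> then G (Suc t) \<omega> else N \<theta> (Suc t) \<omega>))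
      \<in> borel_measurable M"
    by measurable
  moreover have "(\<lambda>\<omega>. indicator (D (Suc t)) \<omega> * (if \<theta> (Suc t) \<omega> then 1 else Q \<theta> (Suc t) \<omega>))
      \<in> borel_measurable M"
    by measurable
  ultimately show ?case
    using N_Suc[of t] Q_Suc[of t] step(2) by (auto cong: measurable_cong)
qed

lemma integrable_N:
  assumes "stopping_policy F T \<theta>" "t \<le> T"
  shows "integrable M (N \<theta> t)"
proof (rule Bochner_Integration.integrable_bound[OF integr])
  show "N \<theta> t \<in> borel_measurable M"
    using N_Q_measurable[OF assms] ..
  show "AE \<omega> in M. norm (N \<theta> t \<omega>) \<le> norm (G_bound \<omega>)"
    using abs_N_le_G_bound G_bound_nonneg by (intro AE_I2) simp
qed

lemma integrable_Q: "stopping_policy F T \<theta> \<Longrightarrow> t \<le> T \<Longrightarrow> integrable M (Q \<theta> t)"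
  using N_Q_measurable by (intro integrable_const_bound[where B=1]) (auto simp: indicator_def)

lemma real_cond_exp_F_stop_or_continue:
  assumes s: "s \<le> T"
    and V: "\<And>\<omega>. \<omega> \<in> space M \<Longrightarrow> V \<omega> = indicator (D s) \<omega> * (if c \<omega> then a \<omega> else V' \<omega>)"
    and int_V: "integrable M V" and int_V': "integrable M V'"
    and c: "c \<in> F s \<rightarrow>\<^sub>M count_space UNIV" and a: "a \<in> borel_measurable (F s)"
    and int_a: "integrable M (\<lambda>\<omega>. indicator (D s) \<omega> * a \<omega>)"
    and v: "AE \<omega> in M. real_cond_exp M (F s) V' \<omega> = v \<omega>"
  shows "AE \<omega> in M. real_cond_exp M (F s) V \<omega> = indicator (D s) \<omega> * (if c \<omega> then a \<omega> else v \<omega>)"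
proof -
  interpret Fs: sigma_finite_subalgebra M "F s"
    using sigma_finite_F[OF s] .
  have [measurable]: "c \<in> M \<rightarrow>\<^sub>M count_space UNIV" "a \<in> borel_measurable M"
    using measurable_from_subalg[OF subalg_F[OF s]] c a by blast+
  have [measurable]: "V \<in> borel_measurable M" "V' \<in> borel_measurable M" "D s \<in> sets M"
    using int_V int_V' D_in_sets[OF s] by auto
  have "AE \<omega> in M. V \<omega> = indicator (D s) \<omega> * (if c \<omega> then a \<omega> else V' \<omega>)"
    using V by (intro AE_I2) simp
  then have "AE \<omega> in M. real_cond_exp M (F s) V \<omega> =
      real_cond_exp M (F s) (\<lambda>\<omega>. indicator (D s) \<omega> * (if c \<omega> then a \<omega> else V' \<omega>)) \<omega>"
    by (rule Fs.real_cond_exp_cong) measurable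
  moreover have "AE \<omega> in M.
      real_cond_exp M (F s) (\<lambda>\<omega>. indicator (D s) \<omega> * (if c \<omega> then a \<omega> else V' \<omega>)) \<omega> =
      indicator (D s) \<omega> * (if c \<omega> then a \<omega> else real_cond_exp M (F s) V' \<omega>)"
    using D_in_F[OF order.refl s] c a by (intro Fs.real_cond_exp_indicator_if int_a int_V')
  ultimately show ?thesis
    using v by eventually_elim simp
qed

lemma real_cond_exp_backward_step:
  assumes t: "t < T"
    and V: "\<And>\<omega>. \<omega> \<in> space M \<Longrightarrow> V \<omega> = indicator (D (Suc t)) \<omega> * (if c \<omega> then a \<omega> else V' \<omega>)"
    and int_V: "integrable M V" and int_V': "integrable M V'"
    and c: "c \<in> XD_alg (Suc t) t \<rightarrow>\<^sub>M count_space UNIV"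
    and a: "a \<in> borel_measurable (XD_alg (Suc t) t)"
    and int_a: "integrable M (\<lambda>\<omega>. indicator (D (Suc t)) \<omega> * a \<omega>)"
    and v: "v \<in> borel_measurable (XD_alg (Suc t) t)"
    and v_version: "AE \<omega> in M. real_cond_exp M (F (Suc t)) V' \<omega> = v \<omega>"
  shows "AE \<omega> in M. real_cond_exp M (F t) V \<omega> =
    real_cond_exp M (state_alg t) (\<lambda>\<omega>. indicator (D (Suc t)) \<omega> * (if c \<omega> then a \<omega> else v \<omega>)) \<omega>"
proof -
  define Y where "Y \<omega> = indicator (D (Suc t)) \<omega> * (if c \<omega> then a \<omega> else v \<omega>)" for \<omega>
  have sT: "Suc t \<le> T"
    using t by simp
  interpret Ft: sigma_finite_subalgebra M "F t"
    using t by (intro sigma_finite_F) simp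
  interpret Fs: sigma_finite_subalgebra M "F (Suc t)"
    using sigma_finite_F[OF sT] .
  have XD_F: "subalgebra (F (Suc t)) (XD_alg (Suc t) t)"
    using sT by (intro subalg_F_XD) auto
  have Y_XD: "Y \<in> borel_measurable (XD_alg (Suc t) t)"
  proof -
    note [measurable] = c a v indicator_D_Suc_measurable_XD[OF sT]
    show ?thesis
      unfolding Y_def by measurable
  qed
  have XD_M: "subalgebra M (XD_alg (Suc t) t)"
    using sT by (intro subalg_XD) auto
  have [measurable]: "Y \<in> borel_measurable M"
    using measurable_from_subalg[OF XD_M Y_XD] .
  have c_F: "c \<in> F (Suc t) \<rightarrow>\<^sub>M count_space UNIV" and a_F: "a \<in> borel_measurable (F (Suc t))"
    using measurable_from_subalg[OF XD_F] c a by blast+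
  have cond_Suc: "AE \<omega> in M. real_cond_exp M (F (Suc t)) V \<omega> = Y \<omega>"
    unfolding Y_def by (rule real_cond_exp_F_stop_or_continue[OF sT V int_V int_V' c_F a_F int_a v_version])
  have int_Y: "integrable M Y"
    using integrable_cong_AE_imp[OF Fs.real_cond_exp_int(1)[OF int_V] \<open>Y \<in> borel_measurable M\<close> cond_Suc] .
  have [measurable]: "V \<in> borel_measurable M"
    using int_V by auto
  have "AE \<omega> in M. real_cond_exp M (F t) (real_cond_exp M (F (Suc t)) V) \<omega> = real_cond_exp M (F t) V \<omega>"
    using subalg_F[OF sT] subalg_F_mono[of t "Suc t"] sT int_V
    by (intro Ft.real_cond_exp_nested_subalg) auto
  moreover have "AE \<omega> in M. real_cond_exp M (F t) (real_cond_exp M (F (Suc t)) V) \<omega> = real_cond_exp M (F t) Y \<omega>"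
    using cond_Suc by (intro Ft.real_cond_exp_cong) measurable
  moreover have "AE \<omega> in M. real_cond_exp M (F t) Y \<omega> = real_cond_exp M (state_alg t) Y \<omega>"
    using real_cond_exp_F_eq_state_alg[OF t Y_XD int_Y] .
  ultimately show ?thesis
    unfolding Y_def[symmetric] by eventually_elim simp
qed

subsection \<open>The equilibrium, constructed backwards from the horizon\<close>

text \<open>By \<open>less_eff_horizon_AE_iff\<close>, the premise of the implication is a.e. the event \<open>t < T\<^sub>e\<close>.\<close>

definition stop_rule :: "nat \<Rightarrow> ('a \<Rightarrow> real) \<Rightarrow> ('a \<Rightarrow> real) \<Rightarrow> 'a \<Rightarrow> bool" where
  "stop_rule t n q \<omega> \<longleftrightarrow> (t < T \<and> \<omega> \<in> D t \<and> surv_prob t \<omega> \<noteq> 0 \<longrightarrow> n \<omega> / q \<omega> \<le> G t \<omega>)"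

text \<open>\<open>num_den k\<close> consists of \<open>state_alg\<close>-measurable versions of the numerator and the
  denominator of \<open>J\<close> at time \<open>T - k\<close> for the policy that follows \<open>stop_rule\<close> afterwards.\<close>

fun num_den :: "nat \<Rightarrow> ('a \<Rightarrow> real) \<times> ('a \<Rightarrow> real)" where
  "num_den 0 = ((\<lambda>_. 0), indicator (D T))"
| "num_den (Suc k) = (let t = T - Suc k; n = fst (num_den k); q = snd (num_den k);
     stop = stop_rule (Suc t) n q in
     (real_cond_exp M (state_alg t) (\<lambda>\<omega>. indicator (D (Suc t)) \<omega> * (if stop \<omega> then G (Suc t) \<omega> else n \<omega>)),
      real_cond_exp M (state_alg t) (\<lambda>\<omega>. indicator (D (Suc t)) \<omega> * (if stop \<omega> then 1 else q \<omega>))))"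

definition num :: "nat \<Rightarrow> 'a \<Rightarrow> real" where
  "num t = fst (num_den (T - t))"

definition den :: "nat \<Rightarrow> 'a \<Rightarrow> real" where
  "den t = snd (num_den (T - t))"

definition eq_policy :: "nat \<Rightarrow> 'a \<Rightarrow> bool" where
  "eq_policy t = stop_rule t (num t) (den t)"

lemma num_horizon: "num T = (\<lambda>_. 0)"
  by (simp add: num_def)

lemma den_horizon: "den T = indicator (D T)"
  by (simp add: den_def)

lemma num_den_Suc:
  assumes "t < T"
  shows "num t = real_cond_exp M (state_alg t)
      (\<lambda>\<omega>. indicator (D (Suc t)) \<omega> * (if eq_policy (Suc t) \<omega> then G (Suc t) \<omega> else num (Suc t) \<omega>))"
    and "den t = real_cond_exp M (state_alg t)
      (\<lambda>\<omega>. indicator (D (Suc t)) \<omega> * (if eq_policy (Suc t) \<omega> then 1 else den (Suc t) \<omega>))"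
proof -
  have steps: "T - t = Suc (T - Suc t)" and prev: "T - Suc (T - Suc t) = t"
    using assms by simp_all
  show "num t = real_cond_exp M (state_alg t)
      (\<lambda>\<omega>. indicator (D (Suc t)) \<omega> * (if eq_policy (Suc t) \<omega> then G (Suc t) \<omega> else num (Suc t) \<omega>))"
    and "den t = real_cond_exp M (state_alg t)
      (\<lambda>\<omega>. indicator (D (Suc t)) \<omega> * (if eq_policy (Suc t) \<omega> then 1 else den (Suc t) \<omega>))"
    unfolding num_def den_def eq_policy_def steps by (simp_all add: Let_def prev)
qed

lemma num_den_measurable:
  assumes "t \<le> T"
  shows "num t \<in> borel_measurable (state_alg t)" "den t \<in> borel_measurable (state_alg t)"
proof -
  have "num t \<in> borel_measurable (state_alg t) \<and> den t \<in> borel_measurable (state_alg t)"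
  proof (cases "t = T")
    case True
    then show ?thesis
      using D_in_XD by (simp add: num_horizon den_horizon)
  qed (use assms in \<open>simp add: num_den_Suc\<close>)
  then show "num t \<in> borel_measurable (state_alg t)" "den t \<in> borel_measurable (state_alg t)"
    by auto
qed

lemma eq_policy_measurable:
  assumes "t \<le> T"
  shows "eq_policy t \<in> state_alg t \<rightarrow>\<^sub>M count_space UNIV"
proof -
  note [measurable] = num_den_measurable[OF assms] surv_prob_measurable G_measurable_XD[OF assms] D_in_XD
  show ?thesis
    unfolding eq_policy_def stop_rule_def by measurable
qed

lemma stopping_policy_eq_policy: "stopping_policy F T eq_policy"
  unfolding stopping_policy_def
  using measurable_from_subalg[OF subalg_F_XD eq_policy_measurable] by blast

lemma markovian_eq_policy: "markovian_policy M T X B eq_policy"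
  unfolding markovian_policy_def using eq_policy_measurable by blast

lemma eq_policy_measurable_XD:
  "Suc t \<le> T \<Longrightarrow> eq_policy (Suc t) \<in> XD_alg (Suc t) t \<rightarrow>\<^sub>M count_space UNIV"
  using measurable_from_subalg[OF subalg_XD_state_alg_Suc eq_policy_measurable] by blast

lemma num_den_measurable_XD:
  assumes "Suc t \<le> T"
  shows "num (Suc t) \<in> borel_measurable (XD_alg (Suc t) t)" "den (Suc t) \<in> borel_measurable (XD_alg (Suc t) t)"
  using measurable_from_subalg[OF subalg_XD_state_alg_Suc[OF assms]] num_den_measurable[OF assms]
  by auto

lemma integrable_indicator_mult_G:
  "t \<le> T \<Longrightarrow> integrable M (\<lambda>\<omega>. indicator (D t) \<omega> * G t \<omega>)"
proof (rule Bochner_Integration.integrable_bound[OF integr])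
  assume t: "t \<le> T"
  have [measurable]: "D t \<in> sets M" "G t \<in> borel_measurable M"
    using D_in_sets[OF t] G_measurable[OF t] by auto
  show "(\<lambda>\<omega>. indicator (D t) \<omega> * G t \<omega>) \<in> borel_measurable M"
    by measurable
  show "AE \<omega> in M. norm (indicator (D t) \<omega> * G t \<omega>) \<le> norm (G_bound \<omega>)"
    using abs_G_le_G_bound[OF t] G_bound_nonneg by (intro AE_I2) (simp add: indicator_def)
qed

lemma real_cond_exp_N_eq_num:
  "t \<le> T \<Longrightarrow> AE \<omega> in M. real_cond_exp M (F t) (N eq_policy t) \<omega> = num t \<omega>"
proof (induction t rule: inc_induct)
  case base
  interpret F: sigma_finite_subalgebra M "F T"
    using sigma_finite_F by simp
  have "N eq_policy T = (\<lambda>_. 0)"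
    by (simp add: stopped_payoff_def fun_eq_iff)
  then show ?case
    by (simp add: num_horizon F.real_cond_exp_F_meas)
next
  case (step t)
  then have "Suc t \<le> T"
    by simp
  note policy = stopping_policy_eq_policy
  show ?case
    unfolding num_den_Suc(1)[OF step(2)]
    using \<open>Suc t \<le> T\<close>
    by (intro real_cond_exp_backward_step[OF step(2) N_Suc[OF step(2)] integrable_N[OF policy]
        integrable_N[OF policy] eq_policy_measurable_XD G_measurable_XD integrable_indicator_mult_G
        num_den_measurable_XD(1) step(3)]) auto
qed

lemma real_cond_exp_Q_eq_den:
  "t \<le> T \<Longrightarrow> AE \<omega> in M. real_cond_exp M (F t) (Q eq_policy t) \<omega> = den t \<omega>"
proof (induction t rule: inc_induct)
  case base
  interpret F: sigma_finite_subalgebra M "F T"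
    using sigma_finite_F by simp
  show ?case
    using D_in_F[of T T] integrable_indicator_D[of T]
    by (simp add: den_horizon stop_before_exit_horizon F.real_cond_exp_F_meas)
next
  case (step t)
  then have "Suc t \<le> T"
    by simp
  note policy = stopping_policy_eq_policy
  show ?case
    unfolding num_den_Suc(2)[OF step(2)]
    using \<open>Suc t \<le> T\<close>
    by (intro real_cond_exp_backward_step[OF step(2) Q_Suc[OF step(2)] integrable_Q[OF policy]
        integrable_Q[OF policy] eq_policy_measurable_XD _ _ num_den_measurable_XD(2) step(3)])
      (auto intro: integrable_indicator_D)
qed

lemma den_bounds: "t \<le> T \<Longrightarrow> AE \<omega> in M. 0 \<le> den t \<omega> \<and> den t \<omega> \<le> 1"
proof -
  assume t: "t \<le> T"
  interpret Ft: sigma_finite_subalgebra M "F t"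
    using sigma_finite_F[OF t] .
  have "AE \<omega> in M. 0 \<le> real_cond_exp M (F t) (Q eq_policy t) \<omega>"
    and "AE \<omega> in M. real_cond_exp M (F t) (Q eq_policy t) \<omega> \<le> 1"
    using integrable_Q[OF stopping_policy_eq_policy t]
    by (auto intro!: Ft.real_cond_exp_ge_c Ft.real_cond_exp_le_c simp: indicator_def)
  with real_cond_exp_Q_eq_den[OF t] show ?thesis
    by eventually_elim simp
qed

text \<open>The denominator of \<open>J\<close> stays positive: where the chain survives one more step with
  positive probability, it does so and then either stops or, by induction, has a positive
  chance of stopping before it exits.\<close>

lemma den_pos: "t \<le> T \<Longrightarrow> AE \<omega> in M. t < T \<longrightarrow> surv_prob t \<omega> \<noteq> 0 \<longrightarrow> 0 < den t \<omega>"
proof (induction t rule: inc_induct)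
  case (step t)
  have sT: "Suc t \<le> T"
    using step(2) by simp
  interpret state: sigma_finite_subalgebra M "state_alg t"
    using sigma_finite_state_alg step(2) by simp
  define Y where "Y \<omega> = indicator (D (Suc t)) \<omega> * (if eq_policy (Suc t) \<omega> then 1 else den (Suc t) \<omega>)" for \<omega>
  have sub: "subalgebra M (state_alg (Suc t))"
    using sT by (intro subalg_XD) auto
  have [measurable]: "eq_policy (Suc t) \<in> M \<rightarrow>\<^sub>M count_space UNIV" "den (Suc t) \<in> borel_measurable M"
    "D (Suc t) \<in> sets M"
    using measurable_from_subalg[OF sub] eq_policy_measurable[OF sT] num_den_measurable[OF sT] D_in_sets[OF sT]
    by auto
  have Y_bounds: "AE \<omega> in M. 0 \<le> Y \<omega> \<and> Y \<omega> \<le> 1"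
    using den_bounds[OF sT] by eventually_elim (auto simp: Y_def indicator_def)
  then have int_Y: "integrable M Y"
    unfolding Y_def by (intro integrable_const_bound[where B=1]) (auto elim: eventually_mono)
  have "AE \<omega> in M. 0 < (indicator (D (Suc t)) \<omega> :: real) \<longrightarrow> 0 < Y \<omega>"
    using step(3)
  proof eventually_elim
    case (elim \<omega>)
    show ?case
    proof
      assume "0 < (indicator (D (Suc t)) \<omega> :: real)"
      then have "\<omega> \<in> D (Suc t)"
        by (simp add: indicator_def split: if_splits)
      then show "0 < Y \<omega>"
        using elim by (auto simp: Y_def eq_policy_def stop_rule_def)
    qed
  qed
  from state.real_cond_exp_support_mono[OF integrable_indicator_D[OF sT] int_Y _ _ this]
  have "AE \<omega> in M. 0 < surv_prob t \<omega> \<longrightarrow> 0 < den t \<omega>"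
    using Y_bounds unfolding surv_prob_def num_den_Suc(2)[OF step(2)] Y_def
    by (auto elim: eventually_mono)
  with surv_prob_nonneg[OF step(2)] show ?case
    by eventually_elim auto
qed simp

lemma cprob_stop_before_exit:
  "cprob M (F t) (stop_before_exit M T X B \<theta> t) = real_cond_exp M (F t) (Q \<theta> t)"
proof -
  have "stop_before_exit M T X B \<theta> t \<inter> space M = stop_before_exit M T X B \<theta> t"
    by (auto simp: stop_before_exit_def)
  then show ?thesis
    by (simp add: cprob_def)
qed

lemma real_cond_exp_N_Q_if_agree:
  assumes t: "t \<le> T" and \<theta>: "stopping_policy F T \<theta>"
    and agree: "\<forall>s. t < s \<longrightarrow> s \<le> T \<longrightarrow> (AE \<omega> in M. \<theta> s \<omega> = eq_policy s \<omega>)"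
  shows "AE \<omega> in M. real_cond_exp M (F t) (N \<theta> t) \<omega> = num t \<omega> \<and> real_cond_exp M (F t) (Q \<theta> t) \<omega> = den t \<omega>"
proof -
  interpret Ft: sigma_finite_subalgebra M "F t"
    using sigma_finite_F[OF t] .
  have "AE \<omega> in M. \<forall>s. t < s \<longrightarrow> s \<le> T \<longrightarrow> \<theta> s \<omega> = eq_policy s \<omega>"
    using agree by (simp add: AE_all_countable)
  then have "AE \<omega> in M. next_stop T \<theta> t \<omega> = next_stop T eq_policy t \<omega>"
    by eventually_elim (rule next_stop_cong, auto)
  then have N_eq: "AE \<omega> in M. N \<theta> t \<omega> = N eq_policy t \<omega>"
    and Q_eq: "AE \<omega> in M. Q \<theta> t \<omega> = Q eq_policy t \<omega>"
    by (eventually_elim, simp add: stopped_payoff_def stop_before_exit_def indicator_def)+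
  have "AE \<omega> in M. real_cond_exp M (F t) (N \<theta> t) \<omega> = real_cond_exp M (F t) (N eq_policy t) \<omega>"
    and "AE \<omega> in M. real_cond_exp M (F t) (Q \<theta> t) \<omega> = real_cond_exp M (F t) (Q eq_policy t) \<omega>"
    using N_Q_measurable[OF \<theta> t] N_Q_measurable[OF stopping_policy_eq_policy t]
    by (auto intro!: Ft.real_cond_exp_cong[OF N_eq] Ft.real_cond_exp_cong[OF Q_eq])
  with real_cond_exp_N_eq_num[OF t] real_cond_exp_Q_eq_den[OF t] show ?thesis
    by eventually_elim simp
qed

lemma eq_policy_AE_iff:
  assumes t: "t \<le> T" and \<theta>: "stopping_policy F T \<theta>"
    and agree: "\<forall>s. t < s \<longrightarrow> s \<le> T \<longrightarrow> (AE \<omega> in M. \<theta> s \<omega> = eq_policy s \<omega>)"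
  shows "AE \<omega> in M. eq_policy t \<omega> = (t < T\<^sub>e \<omega> \<longrightarrow> J \<theta> t \<omega> \<le> G t \<omega>)"
  using real_cond_exp_N_Q_if_agree[OF assms] less_eff_horizon_AE_iff
proof eventually_elim
  case (elim \<omega>)
  then have "J \<theta> t \<omega> = num t \<omega> / den t \<omega>"
    by (simp add: Jval_def cprob_stop_before_exit)
  then show ?case
    using elim(2) t by (simp add: eq_policy_def stop_rule_def)
qed

lemma admissible_eq_policy: "admissible M F T X B eq_policy"
  unfolding admissible_def
proof (intro conjI allI impI stopping_policy_eq_policy)
  fix t assume t: "t \<le> T"
  show "AE \<omega> in M. t < T\<^sub>e \<omega> \<longrightarrow> 0 < cprob M (F t) (stop_before_exit M T X B eq_policy t) \<omega>"
    using less_eff_horizon_AE_iff den_pos[OF t] real_cond_exp_Q_eq_den[OF t]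
    by eventually_elim (use t in \<open>auto simp: cprob_stop_before_exit\<close>)
  show "AE \<omega> in M. T\<^sub>e \<omega> \<le> t \<longrightarrow> eq_policy t \<omega>"
    using less_eff_horizon_AE_iff
    by eventually_elim (use t in \<open>auto simp: eq_policy_def stop_rule_def not_less[symmetric]\<close>)
qed

theorem equilibrium_early_eq_policy: "equilibrium_early M F T X B \<delta> g eq_policy"
  unfolding equilibrium_early_iff
  using admissible_eq_policy eq_policy_AE_iff[OF _ stopping_policy_eq_policy] by simp

theorem equilibrium_early_unique:
  assumes "equilibrium_early M F T X B \<delta> g \<theta>"
  shows "\<forall>t\<le>T. AE \<omega> in M. \<theta> t \<omega> = eq_policy t \<omega>"
proof -
  have \<theta>: "stopping_policy F T \<theta>"
    and best_response: "\<And>t. t \<le> T \<Longrightarrow> AE \<omega> in M. \<theta> t \<omega> = (t < T\<^sub>e \<omega> \<longrightarrow> J \<theta> t \<omega> \<le> G t \<omega>)"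
    using assms by (auto simp: equilibrium_early_iff admissible_def)
  have "AE \<omega> in M. \<theta> t \<omega> = eq_policy t \<omega>" if "t \<le> T" for t
    using that
  proof (induction t rule: measure_induct_rule[where f="\<lambda>t. T - t"])
    case (less t)
    have "\<forall>s. t < s \<longrightarrow> s \<le> T \<longrightarrow> (AE \<omega> in M. \<theta> s \<omega> = eq_policy s \<omega>)"
      using less.IH by (auto simp: diff_less_mono2)
    then have "AE \<omega> in M. eq_policy t \<omega> = (t < T\<^sub>e \<omega> \<longrightarrow> J \<theta> t \<omega> \<le> G t \<omega>)"
      by (rule eq_policy_AE_iff[OF less.prems \<theta>])
    with best_response[OF less.prems] show ?case
      by eventually_elim simp
  qed
  then show ?thesis
    by blast
qed

end

theorem corollary3p3:
  fixes M :: "'a measure" and F :: "nat \<Rightarrow> 'a measure" and T :: nat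
    and X :: "nat \<Rightarrow> 'a \<Rightarrow> 'x::{metric_space, second_countable_topology}"
    and x0 :: 'x and B :: "'x set" and \<delta> :: real and g :: "nat \<Rightarrow> 'x \<Rightarrow> real"
  assumes prob: "prob_space M"
    and filt_sub: "\<forall>t\<le>T. subalgebra M (F t)"
    and filt_mono: "\<forall>s t. s \<le> t \<longrightarrow> t \<le> T \<longrightarrow> sets (F s) \<subseteq> sets (F t)"
    and F0_trivial: "sets (F 0) = {{}, space M}"
    and markov: "markov_chain M F T X"
    and X0: "\<forall>\<omega>\<in>space M. X 0 \<omega> = x0"
    and B_meas: "B \<in> sets borel" and x0B: "x0 \<in> B"
    and g_meas: "\<forall>t\<le>T. g t \<in> borel_measurable borel"
    and delta: "0 < \<delta>" "\<delta> \<le> 1"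
    and integr: "integrable M (\<lambda>\<omega>. Max ((\<lambda>t. \<bar>Gval \<delta> g X t \<omega>\<bar> * indicator (Dset M T X B t) \<omega>) ` {0..T}))"
  shows "\<exists>\<theta>. equilibrium_early M F T X B \<delta> g \<theta> \<and> markovian_policy M T X B \<theta> \<and>
           (\<forall>\<theta>'. equilibrium_early M F T X B \<delta> g \<theta>' \<longrightarrow>
                  (\<forall>t\<le>T. AE \<omega> in M. \<theta>' t \<omega> = \<theta> t \<omega>))"
proof -
  interpret markov_stopping M F T X B \<delta> g
    by (rule markov_stopping.intro; fact)
  show ?thesis
    using equilibrium_early_eq_policy markovian_eq_policy equilibrium_early_unique by blast
qed

end
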